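(* Let $M$ be a finite rectangular monoid, $k$ a field which is a splitting field for the maximal subgroups of $M$, $X,Y\in\Lambda(M)$ with $X<Y$, and $e_X<e_Y$ chosen idempotent generators of $X,Y$. Let $A$ be a $k[G_Y\times G_X^{op}]$-module regarded as an $M$-bimodule via $m\cdot a\cdot m'=\rho_Y(m)a\rho_X(m')$. Then $H^1(M,A)\cong\mathrm{Hom}_{k[G_Y\times G_X^{op}]}(V_{X,Y},A)$.
   Context: $E(M)$ idempotents, $m^\omega$ idempotent power; $e<f$ means $ef=e=fe\neq f$. $M$ rectangular: each $\{f\in E(M):MfM=MeM\}$ closed under multiplication. $\Lambda(M)$: ideals $MeM$ ordered by inclusion; $\sigma(m)=Mm^\omega M$; $\sigma(m)\ge X$ iff $X\subseteq\sigma(m)$; $\nabla X=\{m:X\not\subseteq MmM\}$; $\nabla Y\nabla X=\{ab:a\in\nabla Y,b\in\nabla X\}$. $G_X$ = group of units of $e_XMe_X$; $\rho_X(m)=e_Xme_X$ if $\sigma(m)\ge X$, else $0$. Let $\sim$ be the least equivalence relation on $e_YMe_X$ with: $e_Ymne_X\sim e_Yme_Yne_X$ for all $m,n\in M$; $e_Ymne_X\sim e_Yme_Xne_X$ for all $n$ whenever $\sigma(m)\not\ge Y$; $z\sim z'$ for all $z,z'\in\nabla Y\nabla X\cap e_YMe_X$. $W_{X,Y}=k[e_YMe_X]/Z_{X,Y}$, $Z_{X,Y}$ spanned by $\nabla Y\nabla X\cap e_YMe_X$ and differences of $\sim$-related elements; $W_{X,Y}$ is a $G_Y\times G_X^{op}$-module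 by left/right multiplication, and $a\mapsto\rho_X(a)$ induces a well-defined surjective module map $W_{X,Y}\to kG_X$ (with $G_Y$ acting on $kG_X$ through $\rho_X$). $V_{X,Y}$ is its kernel. $H^1(M,A)$: derivations modulo inner derivations $m\mapsto ma-am$. *)

theory Defs
  imports Main "Jordan_Normal_Form.Matrix"
begin

section \<open>Monoid-theoretic notions (the monoid M is the whole type 'm)\<close>

definition idem :: "'m::monoid_mult \<Rightarrow> bool" where
  "idem e \<longleftrightarrow> e * e = e"

text \<open>Idempotent power m^omega (unique idempotent positive power; exists in a finite monoid).\<close>
definition omega :: "'m::monoid_mult \<Rightarrow> 'm" where
  "omega m = (THE e. idem e \<and> (\<exists>n>0. m ^ n = e))"

definition ideal2 :: "'m::monoid_mult \<Rightarrow> 'm set" where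
  "ideal2 m = {a * m * b | a b. True}"

definition Lambda :: "'m::monoid_mult set set" where
  "Lambda = {ideal2 e | e. idem e}"

definition rectangular :: "'m::monoid_mult itself \<Rightarrow> bool" where
  "rectangular TYPE('m) \<longleftrightarrow>
     (\<forall>e f g :: 'm. idem e \<and> idem f \<and> idem g \<and> ideal2 f = ideal2 e \<and> ideal2 g = ideal2 e
        \<longrightarrow> idem (f * g) \<and> ideal2 (f * g) = ideal2 e)"

definition sigma :: "'m::monoid_mult \<Rightarrow> 'm set" where
  "sigma m = ideal2 (omega m)"

definition sigma_ge :: "'m::monoid_mult \<Rightarrow> 'm set \<Rightarrow> bool" where
  "sigma_ge m X \<longleftrightarrow> X \<subseteq> sigma m"

definition nabla :: "'m::monoid_mult set \<Rightarrow> 'm set" where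
  "nabla X = {m. \<not> X \<subseteq> ideal2 m}"

definition nabla2 :: "'m::monoid_mult set \<Rightarrow> 'm set \<Rightarrow> 'm set" where
  "nabla2 Y X = {a * b | a b. a \<in> nabla Y \<and> b \<in> nabla X}"

definition corner :: "'m::monoid_mult \<Rightarrow> 'm \<Rightarrow> 'm set" where
  "corner e f = {e * m * f | m. True}"

definition Gunits :: "'m::monoid_mult \<Rightarrow> 'm set" where
  "Gunits e = {g \<in> corner e e. \<exists>h \<in> corner e e. g * h = e \<and> h * g = e}"

definition is_rep :: "'m::monoid_mult \<Rightarrow> nat \<Rightarrow> ('m \<Rightarrow> 'k::field mat) \<Rightarrow> bool" where
  "is_rep e n R \<longleftrightarrow> (\<forall>g \<in> Gunits e. R g \<in> carrier_mat n n) \<and> R e = 1\<^sub>m n \<and>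
     (\<forall>g \<in> Gunits e. \<forall>h \<in> Gunits e. R (g * h) = R g * R h)"

definition invariant_subspace :: "'m::monoid_mult \<Rightarrow> nat \<Rightarrow> ('m \<Rightarrow> 'k::field mat) \<Rightarrow> 'k vec set \<Rightarrow> bool" where
  "invariant_subspace e n R U \<longleftrightarrow> U \<subseteq> carrier_vec n \<and> 0\<^sub>v n \<in> U \<and>
     (\<forall>u \<in> U. \<forall>v \<in> U. u + v \<in> U) \<and> (\<forall>c. \<forall>u \<in> U. c \<cdot>\<^sub>v u \<in> U) \<and>
     (\<forall>g \<in> Gunits e. \<forall>u \<in> U. R g *\<^sub>v u \<in> U)"

definition irreducible_rep :: "'m::monoid_mult \<Rightarrow> nat \<Rightarrow> ('m \<Rightarrow> 'k::field mat) \<Rightarrow> bool" where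
  "irreducible_rep e n R \<longleftrightarrow> is_rep e n R \<and> n > 0 \<and>
     (\<forall>U. invariant_subspace e n R U \<longrightarrow> U = {0\<^sub>v n} \<or> U = carrier_vec n)"

text \<open>k is a splitting field for the group Gunits e: every irreducible representation is
  absolutely irreducible, i.e. its endomorphism algebra is k.\<close>
definition splitting_field_for :: "'k::field itself \<Rightarrow> 'm::monoid_mult \<Rightarrow> bool" where
  "splitting_field_for TYPE('k) e \<longleftrightarrow>
     (\<forall>n (R :: 'm \<Rightarrow> 'k mat). irreducible_rep e n R \<longrightarrow>
        (\<forall>A \<in> carrier_mat n n. (\<forall>g \<in> Gunits e. A * R g = R g * A) \<longrightarrow> (\<exists>c. A = c \<cdot>\<^sub>m 1\<^sub>m n)))"

definition splitting_field_maxsubgroups :: "'k::field itself \<Rightarrow> 'm::monoid_mult itself \<Rightarrow> bool" where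
  "splitting_field_maxsubgroups TYPE('k) TYPE('m) \<longleftrightarrow>
     (\<forall>e :: 'm. idem e \<longrightarrow> splitting_field_for TYPE('k) e)"

text \<open>Elements of k[eY M eX]: functions M -> k supported in eY M eX.\<close>
definition freeS :: "'m::monoid_mult \<Rightarrow> 'm \<Rightarrow> ('m \<Rightarrow> 'k::field) set" where
  "freeS eX eY = {c. \<forall>a. a \<notin> corner eY eX \<longrightarrow> c a = 0}"

definition delta :: "'m \<Rightarrow> 'm \<Rightarrow> 'k::field" where
  "delta z = (\<lambda>a. if a = z then 1 else 0)"

definition sim_gen :: "'m::monoid_mult \<Rightarrow> 'm \<Rightarrow> ('m \<times> 'm) set" where
  "sim_gen eX eY =
     {(eY * m * n * eX, eY * m * eY * n * eX) | m n. True} \<union>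
     {(eY * m * n * eX, eY * m * eX * n * eX) | m n. \<not> sigma_ge m (ideal2 eY)} \<union>
     {(z, z') | z z'. z \<in> nabla2 (ideal2 eY) (ideal2 eX) \<inter> corner eY eX \<and>
                      z' \<in> nabla2 (ideal2 eY) (ideal2 eX) \<inter> corner eY eX}"

definition sim_rel :: "'m::monoid_mult \<Rightarrow> 'm \<Rightarrow> ('m \<times> 'm) set" where
  "sim_rel eX eY = \<Inter> {E. equiv (corner eY eX) E \<and> sim_gen eX eY \<subseteq> E}"

definition kspan :: "('m \<Rightarrow> 'k::field) set \<Rightarrow> ('m \<Rightarrow> 'k) set" where
  "kspan B = \<Inter> {U. (\<lambda>_. 0) \<in> U \<and> (\<forall>u \<in> U. \<forall>v \<in> U. (\<lambda>a. u a + v a) \<in> U) \<and>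
                   (\<forall>c. \<forall>u \<in> U. (\<lambda>a. c * u a) \<in> U) \<and> B \<subseteq> U}"

definition Zsub :: "'m::monoid_mult \<Rightarrow> 'm \<Rightarrow> ('m \<Rightarrow> 'k::field) set" where
  "Zsub eX eY = kspan
     ({delta z | z. z \<in> nabla2 (ideal2 eY) (ideal2 eX) \<inter> corner eY eX} \<union>
      {(\<lambda>a. delta z a - delta z' a) | z z'. (z, z') \<in> sim_rel eX eY})"

text \<open>The class of c in W_{X,Y} = k[eY M eX] / Z_{X,Y}.\<close>
definition Wclass :: "'m::monoid_mult \<Rightarrow> 'm \<Rightarrow> ('m \<Rightarrow> 'k::field) \<Rightarrow> ('m \<Rightarrow> 'k) set" where
  "Wclass eX eY c = {(\<lambda>a. c a + z a) | z. z \<in> Zsub eX eY}"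

definition Wspace :: "'m::monoid_mult \<Rightarrow> 'm \<Rightarrow> ('m \<Rightarrow> 'k::field) set set" where
  "Wspace eX eY = Wclass eX eY ` freeS eX eY"

text \<open>The linear map k[eY M eX] -> kG_X induced by a |-> rho_X(a).\<close>
definition rhoX_lin :: "'m::{monoid_mult,finite} \<Rightarrow> 'm \<Rightarrow> ('m \<Rightarrow> 'k::field) \<Rightarrow> 'm \<Rightarrow> 'k" where
  "rhoX_lin eX eY c = (\<lambda>g. \<Sum>a \<in> {a \<in> corner eY eX. sigma_ge a (ideal2 eX) \<and> eX * a * eX = g}. c a)"

definition Vspace :: "'m::{monoid_mult,finite} \<Rightarrow> 'm \<Rightarrow> ('m \<Rightarrow> 'k::field) set set" where
  "Vspace eX eY = {Wclass eX eY c | c. c \<in> freeS eX eY \<and> rhoX_lin eX eY c = (\<lambda>_. 0)}"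

definition actL :: "'m::{monoid_mult,finite} \<Rightarrow> ('m \<Rightarrow> 'k::field) \<Rightarrow> 'm \<Rightarrow> 'k" where
  "actL g c = (\<lambda>b. \<Sum>a \<in> {a. g * a = b}. c a)"

definition actR :: "('m::{monoid_mult,finite} \<Rightarrow> 'k::field) \<Rightarrow> 'm \<Rightarrow> 'm \<Rightarrow> 'k" where
  "actR c h = (\<lambda>b. \<Sum>a \<in> {a. a * h = b}. c a)"

definition GG_module ::
  "('k::field \<Rightarrow> 'a::ab_group_add \<Rightarrow> 'a) \<Rightarrow> 'm::monoid_mult \<Rightarrow> 'm \<Rightarrow>
   ('m \<Rightarrow> 'a \<Rightarrow> 'a) \<Rightarrow> ('a \<Rightarrow> 'm \<Rightarrow> 'a) \<Rightarrow> bool" where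
  "GG_module scale eX eY l r \<longleftrightarrow>
     vector_space scale \<and>
     (\<forall>g \<in> Gunits eY. \<forall>c a b. l g (a + b) = l g a + l g b \<and> l g (scale c a) = scale c (l g a)) \<and>
     (\<forall>h \<in> Gunits eX. \<forall>c a b. r (a + b) h = r a h + r b h \<and> r (scale c a) h = scale c (r a h)) \<and>
     (\<forall>a. l eY a = a) \<and> (\<forall>a. r a eX = a) \<and>
     (\<forall>g \<in> Gunits eY. \<forall>g' \<in> Gunits eY. \<forall>a. l (g * g') a = l g (l g' a)) \<and>
     (\<forall>h \<in> Gunits eX. \<forall>h' \<in> Gunits eX. \<forall>a. r a (h * h') = r (r a h) h') \<and>
     (\<forall>g \<in> Gunits eY. \<forall>h \<in> Gunits eX. \<forall>a. l g (r a h) = r (l g a) h)"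

text \<open>The M-bimodule structure m.a.m' = rho_Y(m) a rho_X(m').\<close>
definition bimodL :: "'m::monoid_mult \<Rightarrow> ('m \<Rightarrow> 'a \<Rightarrow> 'a::ab_group_add) \<Rightarrow> 'm \<Rightarrow> 'a \<Rightarrow> 'a" where
  "bimodL eY l m a = (if sigma_ge m (ideal2 eY) then l (eY * m * eY) a else 0)"

definition bimodR :: "'m::monoid_mult \<Rightarrow> ('a::ab_group_add \<Rightarrow> 'm \<Rightarrow> 'a) \<Rightarrow> 'a \<Rightarrow> 'm \<Rightarrow> 'a" where
  "bimodR eX r a m = (if sigma_ge m (ideal2 eX) then r a (eX * m * eX) else 0)"

definition Der :: "('m::monoid_mult \<Rightarrow> 'a \<Rightarrow> 'a::ab_group_add) \<Rightarrow> ('a \<Rightarrow> 'm \<Rightarrow> 'a) \<Rightarrow> ('m \<Rightarrow> 'a) set" where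
  "Der L R = {d. \<forall>m n. d (m * n) = L m (d n) + R (d m) n}"

definition Inn :: "('m::monoid_mult \<Rightarrow> 'a \<Rightarrow> 'a::ab_group_add) \<Rightarrow> ('a \<Rightarrow> 'm \<Rightarrow> 'a) \<Rightarrow> ('m \<Rightarrow> 'a) set" where
  "Inn L R = {(\<lambda>m. L m a - R a m) | a. True}"

definition H1class :: "('m::monoid_mult \<Rightarrow> 'a \<Rightarrow> 'a::ab_group_add) \<Rightarrow> ('a \<Rightarrow> 'm \<Rightarrow> 'a) \<Rightarrow> ('m \<Rightarrow> 'a) \<Rightarrow> ('m \<Rightarrow> 'a) set" where
  "H1class L R d = {(\<lambda>m. d m + i m) | i. i \<in> Inn L R}"

definition H1 :: "('m::monoid_mult \<Rightarrow> 'a \<Rightarrow> 'a::ab_group_add) \<Rightarrow> ('a \<Rightarrow> 'm \<Rightarrow> 'a) \<Rightarrow> ('m \<Rightarrow> 'a) set set" where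
  "H1 L R = H1class L R ` Der L R"

text \<open>Module homomorphisms V -> A, as functions on the classes in V (extended by 0 outside V);
  the operations on V are those induced from representatives.\<close>
definition HomV ::
  "('k::field \<Rightarrow> 'a::ab_group_add \<Rightarrow> 'a) \<Rightarrow> 'm::{monoid_mult,finite} \<Rightarrow> 'm \<Rightarrow>
   ('m \<Rightarrow> 'a \<Rightarrow> 'a) \<Rightarrow> ('a \<Rightarrow> 'm \<Rightarrow> 'a) \<Rightarrow> (('m \<Rightarrow> 'k) set \<Rightarrow> 'a) set" where
  "HomV scale eX eY l r =
     {\<phi>. (\<forall>v. v \<notin> Vspace eX eY \<longrightarrow> \<phi> v = 0) \<and>
         (\<forall>c c'. Wclass eX eY c \<in> Vspace eX eY \<and> Wclass eX eY c' \<in> Vspace eX eY \<and>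
                 c \<in> freeS eX eY \<and> c' \<in> freeS eX eY \<longrightarrow>
            \<phi> (Wclass eX eY (\<lambda>a. c a + c' a)) = \<phi> (Wclass eX eY c) + \<phi> (Wclass eX eY c')) \<and>
         (\<forall>t c. Wclass eX eY c \<in> Vspace eX eY \<and> c \<in> freeS eX eY \<longrightarrow>
            \<phi> (Wclass eX eY (\<lambda>a. t * c a)) = scale t (\<phi> (Wclass eX eY c))) \<and>
         (\<forall>g \<in> Gunits eY. \<forall>c. Wclass eX eY c \<in> Vspace eX eY \<and> c \<in> freeS eX eY \<longrightarrow>
            \<phi> (Wclass eX eY (actL g c)) = l g (\<phi> (Wclass eX eY c))) \<and>
         (\<forall>h \<in> Gunits eX. \<forall>c. Wclass eX eY c \<in> Vspace eX eY \<and> c \<in> freeS eX eY \<longrightarrow>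
            \<phi> (Wclass eX eY (actR c h)) = r (\<phi> (Wclass eX eY c)) h)}"

end

theory Submission
  imports Defs
begin

text \<open>
  In a finite rectangular monoid \<open>\<sigma>(m) \<ge> X\<close> holds exactly when \<open>e\<^sub>X m e\<^sub>X\<close> is a unit
  of \<open>e\<^sub>X M e\<^sub>X\<close>, and then \<open>\<rho>\<^sub>X\<close> is multiplicative; this is what makes \<open>A\<close> an
  \<open>M\<close>-bimodule. Adding the inner derivation of \<open>d(e\<^sub>X)\<close> to a derivation \<open>d\<close> gives one
  vanishing at \<open>e\<^sub>X\<close>; such a derivation kills \<open>\<nabla>Y\<nabla>X\<close> and is constant on
  \<open>\<sim>\<close>-classes, so \<open>\<Sum> c\<^sub>a [a] \<mapsto> \<Sum> c\<^sub>a d(a)\<close> is well defined on \<open>V\<close>. Inner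
  derivations vanish there: \<open>\<rho>\<^sub>Y\<close> kills \<open>e\<^sub>Y M e\<^sub>X\<close>, and the coefficients of an element
  of \<open>V\<close> sum to zero on every fibre of \<open>\<rho>\<^sub>X\<close>. Conversely \<open>V\<close> is spanned by the
  classes \<open>[e\<^sub>Y m e\<^sub>X] - [\<rho>\<^sub>X(m)]\<close>, and for a homomorphism \<open>\<phi>\<close> the map
  \<open>m \<mapsto> \<phi>([e\<^sub>Y m e\<^sub>X] - [\<rho>\<^sub>X(m)])\<close> satisfies the Leibniz rule precisely because of the
  relations defining \<open>\<sim>\<close> and \<open>\<nabla>Y\<nabla>X\<close>.
\<close>

section \<open>Finite monoids\<close>

lemma idem_power: "idem (x::'m::monoid_mult) \<Longrightarrow> n > 0 \<Longrightarrow> x ^ n = x"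
proof (induction n)
  case 0 then show ?case by simp
next
  case (Suc n) then show ?case
    by (cases "n = 0") (auto simp: idem_def power_Suc2)
qed

lemma power_periodic:
  fixes m :: "'m::monoid_mult"
  assumes "m ^ s = m ^ (s + p)" "a \<ge> s"
  shows "m ^ (a + t * p) = m ^ a"
proof (induction t)
  case 0 then show ?case by simp
next
  case (Suc t)
  have e: "a + Suc t * p = (a + t * p - s) + (s + p)" using assms(2) by simp
  have e2: "(a + t * p - s) + s = a + t * p" using assms(2) by simp
  have "m ^ (a + Suc t * p) = m ^ (a + t * p - s) * m ^ (s + p)"
    by (simp only: e power_add)
  also have "\<dots> = m ^ (a + t * p - s) * m ^ s" using assms(1) by simp
  also have "\<dots> = m ^ (a + t*p)" by (simp only: e2 power_add[symmetric])
  finally show ?case using Suc by simp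
qed

lemma ex_idem_power:
  fixes m :: "'m::{monoid_mult,finite}"
  shows "\<exists>n>0. idem (m ^ n)"
proof -
  have "\<not> inj (\<lambda>i::nat. m ^ i)"
  proof
    assume inj: "inj (\<lambda>i::nat. m ^ i)"
    have "finite (range (\<lambda>i::nat. m ^ i))" by simp
    from finite_imageD[OF this inj] show False by simp
  qed
  then obtain i j :: nat where ij: "i \<noteq> j" "m ^ i = m ^ j" unfolding inj_def by blast
  obtain s p where sp: "p > 0" "m ^ s = m ^ (s + p)"
  proof (cases "i < j")
    case True then show ?thesis using that[of "j - i" i] ij by simp
  next
    case False then show ?thesis using that[of "i - j" j] ij by simp
  qed
  define N where "N = (Suc s) * p"
  have "s \<le> s * p" using sp(1) by simp
  then have N: "N \<ge> s" "N > 0" using sp(1) unfolding N_def mult_Suc by linarith+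
  have "m ^ N * m ^ N = m ^ (N + Suc s * p)" by (simp only: power_add N_def)
  also have "\<dots> = m ^ N" using power_periodic[OF sp(2) N(1), of "Suc s"] .
  finally have "m ^ N * m ^ N = m ^ N" .
  then show ?thesis using N(2) by (auto simp: idem_def)
qed

lemma omega_idem_power:
  fixes m :: "'m::{monoid_mult,finite}"
  shows "idem (omega m) \<and> (\<exists>n>0. m ^ n = omega m)"
proof -
  obtain n where n: "n > 0" "idem (m ^ n)" using ex_idem_power by blast
  have uniq: "x = m ^ n" if x: "idem x" "\<exists>k>0. m ^ k = x" for x
  proof -
    obtain k where k: "k > 0" "m ^ k = x" using x(2) by blast
    have "x = x ^ n" using idem_power[OF x(1) n(1)] by simp
    also have "\<dots> = (m ^ k) ^ n" using k(2) by simp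
    also have "\<dots> = m ^ (k * n)" by (rule power_mult[symmetric])
    also have "\<dots> = m ^ (n * k)" by (simp only: mult.commute)
    also have "\<dots> = (m ^ n) ^ k" by (rule power_mult)
    also have "\<dots> = m ^ n" using idem_power[OF n(2) k(1)] .
    finally show ?thesis .
  qed
  have ex: "idem (m ^ n) \<and> (\<exists>k>0. m ^ k = m ^ n)" using n by blast
  have "omega m = m ^ n" unfolding omega_def
  proof (rule the_equality)
    show "idem (m ^ n) \<and> (\<exists>k>0. m ^ k = m ^ n)" by (rule ex)
  next
    fix x assume "idem x \<and> (\<exists>k>0. m ^ k = x)"
    then show "x = m ^ n" using uniq by blast
  qed
  then show ?thesis using n by auto
qed

lemma ideal2_self: "x \<in> ideal2 (x::'m::monoid_mult)"
  unfolding ideal2_def by (rule CollectI, rule exI[of _ 1], rule exI[of _ 1]) simp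

lemma ideal2_mono: "y \<in> ideal2 x \<Longrightarrow> ideal2 y \<subseteq> ideal2 (x::'m::monoid_mult)"
proof
  fix z assume "y \<in> ideal2 x" "z \<in> ideal2 y"
  then obtain a b c d where "y = a * x * b" "z = c * y * d" unfolding ideal2_def by blast
  then have "z = (c * a) * x * (b * d)" by (simp add: mult.assoc)
  then show "z \<in> ideal2 x" unfolding ideal2_def by blast
qed

lemma ideal2_subset_iff: "ideal2 y \<subseteq> ideal2 x \<longleftrightarrow> y \<in> ideal2 (x::'m::monoid_mult)"
  using ideal2_self ideal2_mono by blast

lemma ideal2_I: "y = a * x * b \<Longrightarrow> y \<in> ideal2 (x::'m::monoid_mult)"
  unfolding ideal2_def by blast

lemma ideal2_E: "y \<in> ideal2 (x::'m::monoid_mult) \<Longrightarrow> (\<And>a b. y = a * x * b \<Longrightarrow> P) \<Longrightarrow> P"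
  unfolding ideal2_def by blast

lemma stable_right:
  fixes a b :: "'m::{monoid_mult,finite}"
  assumes "a \<in> ideal2 (a * b)"
  shows "\<exists>s. a = a * b * s"
proof -
  obtain x y where xy: "a = x * (a * b) * y" using assms by (auto elim: ideal2_E)
  have it: "a = x ^ n * a * (b * y) ^ n" for n
  proof (induction n)
    case 0 then show ?case by simp
  next
    case (Suc n)
    have "x ^ Suc n * a * (b * y) ^ Suc n = x ^ n * (x * a * b * y) * (b*y)^n"
      by (simp only: power_Suc2[of x] power_Suc[of "b*y"] mult.assoc)
    also have "\<dots> = x ^ n * a * (b*y)^n" using xy by (simp add: mult.assoc)
    finally show ?case using Suc by simp
  qed
  obtain n where n: "n > 0" "idem (x ^ n)" using ex_idem_power by blast
  have "x ^ n * a = a"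
  proof -
    have "x ^ n * a = x ^ n * (x ^ n * a * (b * y) ^ n)" using it[of n] by metis
    also have "\<dots> = x ^ n * a * (b * y) ^ n" using n(2) by (simp add: idem_def mult.assoc[symmetric])
    also have "\<dots> = a" using it[of n] by simp
    finally show ?thesis .
  qed
  then have "a = a * (b * y) ^ n" using it[of n] by (metis mult.assoc)
  also have "\<dots> = a * b * (y * (b * y) ^ (n - 1))"
    using n(1) by (cases n) (auto simp: mult.assoc power_Suc)
  finally show ?thesis by blast
qed

lemma stable_left:
  fixes a b :: "'m::{monoid_mult,finite}"
  assumes "a \<in> ideal2 (b * a)"
  shows "\<exists>s. a = s * b * a"
proof -
  obtain x y where xy: "a = x * (b * a) * y" using assms by (auto elim: ideal2_E)
  have it: "a = (x * b) ^ n * a * y ^ n" for n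
  proof (induction n)
    case 0 then show ?case by simp
  next
    case (Suc n)
    have "(x * b) ^ Suc n * a * y ^ Suc n = (x*b)^n * (x * b * a * y) * y^n"
      by (simp only: power_Suc2[of "x*b"] power_Suc[of y] mult.assoc)
    also have "\<dots> = (x*b) ^ n * a * y^n" using xy by (simp add: mult.assoc)
    finally show ?case using Suc by simp
  qed
  obtain n where n: "n > 0" "idem (y ^ n)" using ex_idem_power by blast
  have "a * y ^ n = a"
  proof -
    have "a * y ^ n = ((x * b) ^ n * a * y ^ n) * y ^ n" using it[of n] by metis
    also have "\<dots> = (x * b) ^ n * a * y ^ n" using n(2) by (simp add: idem_def mult.assoc)
    also have "\<dots> = a" using it[of n] by simp
    finally show ?thesis .
  qed
  then have "a = (x * b) ^ n * a" using it[of n] by (metis mult.assoc)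
  also have "\<dots> = ((x * b) ^ (n - 1) * x) * b * a"
  proof -
    obtain k where k: "n = Suc k" using n(1) by (cases n) auto
    show ?thesis unfolding k by (simp only: power_Suc2 diff_Suc_1 mult.assoc)
  qed
  finally show ?thesis by blast
qed

lemma omega_in_ideal: "omega (z::'m::{monoid_mult,finite}) \<in> ideal2 z"
proof -
  obtain n where n: "n > 0" "z ^ n = omega z" using omega_idem_power[of z] by blast
  have "z ^ n = 1 * z * z ^ (n - 1)" using n(1) by (cases n) auto
  then show ?thesis using n(2) ideal2_I by metis
qed

lemma idemD: "idem e \<Longrightarrow> e * e = e" by (simp add: idem_def)
lemma idemD2: "idem e \<Longrightarrow> e * (e * x) = e * x" by (simp add: idem_def mult.assoc[symmetric])

lemma idem_below_eq:
  fixes e u :: "'m::{monoid_mult,finite}"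
  assumes "idem e" "idem u" "u = e * u" "u = u * e" "e \<in> ideal2 u"
  shows "u = e"
proof -
  have "e \<in> ideal2 (e * u)" using assms by simp
  then obtain s where s: "e = e * u * s" using stable_right by blast
  then have es: "e = u * s" using assms(3) by simp
  then have "u * e = u * u * s" by (simp add: mult.assoc)
  also have "\<dots> = e" using es assms(2) by (simp add: idem_def)
  finally show ?thesis using assms(4) by simp
qed

lemma mult_eq_lift: "a * b = (c::'m::monoid_mult) \<Longrightarrow> a * (b * w) = c * w"
  by (simp add: mult.assoc[symmetric])

lemma cornerI: "e * g * f = g \<Longrightarrow> g \<in> corner e f"
  unfolding corner_def by (rule CollectI, rule exI[of _ g]) simp

lemma GunitsI: "e * g * e = g \<Longrightarrow> e * h * e = h \<Longrightarrow> g * h = e \<Longrightarrow> h * g = e \<Longrightarrow> g \<in> Gunits e"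
  unfolding Gunits_def using cornerI[of e g e] cornerI[of e h e] by blast

lemma GunitsD:
  assumes "g \<in> Gunits e" "idem e"
  shows "e * g = g" "g * e = g" "\<exists>h. e * h = h \<and> h * e = h \<and> g * h = e \<and> h * g = e \<and> h \<in> Gunits e"
proof -
  obtain m h k where g: "g = e * m * e" "h = e * k * e" "g * h = e" "h * g = e"
    using assms(1) unfolding Gunits_def corner_def by blast
  show "e * g = g" "g * e = g" using g(1) assms(2) by (simp_all add: mult.assoc idemD2 idemD)
  have "e * h = h" "h * e = h" using g(2) assms(2) by (simp_all add: mult.assoc idemD2 idemD)
  moreover have "h \<in> Gunits e"
    using g assms(2) by (intro GunitsI[of e h g]) (simp_all add: mult.assoc idemD2 idemD)
  ultimately show "\<exists>h. e * h = h \<and> h * e = h \<and> g * h = e \<and> h * g = e \<and> h \<in> Gunits e"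
    using g by blast
qed

lemma Gunits_one: "idem e \<Longrightarrow> e \<in> Gunits e"
  by (rule GunitsI[of e e e]) (simp_all add: idemD)

lemma Gunits_mult:
  assumes "g \<in> Gunits e" "g' \<in> Gunits e" "idem e"
  shows "g * g' \<in> Gunits e"
proof -
  obtain h where h: "e * h = h" "h * e = h" "g * h = e" "h * g = e" using GunitsD[OF assms(1,3)] by blast
  obtain h' where h': "e * h' = h'" "h' * e = h'" "g' * h' = e" "h' * g' = e" using GunitsD[OF assms(2,3)] by blast
  note gg = GunitsD(1,2)[OF assms(1,3)] GunitsD(1,2)[OF assms(2,3)]
  have "g * g' * (h' * h) = g * (g' * h') * h" by (simp add: mult.assoc)
  also have "\<dots> = e" using h h' gg by simp
  finally have 1: "g * g' * (h' * h) = e" .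
  have "h' * h * (g * g') = h' * (h * g) * g'" by (simp add: mult.assoc)
  also have "\<dots> = e" using h h' gg by simp
  finally have 2: "h' * h * (g * g') = e" .
  show ?thesis
    by (rule GunitsI[OF _ _ 1 2]) (use h h' gg in \<open>simp_all add: mult.assoc mult_eq_lift\<close>)
qed

lemma corner_unitI:
  fixes e z :: "'m::{monoid_mult,finite}"
  assumes "idem e" "e * z = z" "z * e = z" "e \<in> ideal2 z"
  shows "z \<in> Gunits e"
proof -
  have "e \<in> ideal2 (e * z)" using assms by simp
  then obtain s where s: "e = e * z * s" using stable_right by blast
  then have s': "e = z * s" using assms(2) by simp
  have "e \<in> ideal2 (z * e)" using assms by simp
  then obtain t where t: "e = t * z * e" using stable_left by blast
  then have t': "e = t * z" using assms(3) by (simp add: mult.assoc)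
  define h where "h = e * s * e"
  define h' where "h' = e * t * e"
  have ee: "e * e = e" "\<And>x. e * (e * x) = e * x" using assms(1) by (simp_all add: idemD idemD2)
  have "z * h = (z * e) * s * e" by (simp add: h_def mult.assoc)
  also have "\<dots> = (z * s) * e" using assms(3) by simp
  also have "\<dots> = e" using s' ee by simp
  finally have zh: "z * h = e" .
  have "h' * z = e * t * (e * z)" by (simp add: h'_def mult.assoc)
  also have "\<dots> = e * (t * z)" using assms(2) by (simp add: mult.assoc)
  also have "\<dots> = e" by (simp only: t'[symmetric] ee)
  finally have hz: "h' * z = e" .
  have "h' = h' * (z * h)" using zh h'_def ee by (simp add: mult.assoc)
  also have "\<dots> = (h' * z) * h" by (simp add: mult.assoc)
  also have "\<dots> = h" using hz h_def ee by (simp add: mult.assoc)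
  finally have "h' = h" .
  then show ?thesis
    using zh hz assms unfolding h_def
    by (intro GunitsI[of e z h]) (simp_all add: mult.assoc idemD2 h_def ee)
qed

section \<open>Rectangular monoids\<close>

lemma rectD:
  assumes "rectangular TYPE('m::monoid_mult)" "idem (e::'m)" "idem f" "idem g"
    "ideal2 f = ideal2 e" "ideal2 g = ideal2 e"
  shows "idem (f * g)" "ideal2 (f * g) = ideal2 e"
  using assms unfolding rectangular_def by blast+

lemma ideal2_eqI: "x \<in> ideal2 y \<Longrightarrow> y \<in> ideal2 x \<Longrightarrow> ideal2 x = ideal2 (y::'m::monoid_mult)"
  using ideal2_subset_iff by blast

lemma rect_idem_sandwich:
  fixes e f :: "'m::{monoid_mult,finite}"
  assumes rect: "rectangular TYPE('m)" and "idem e" "idem f" "ideal2 f = ideal2 e"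
  shows "e * f * e = e"
proof -
  have 1: "idem (e * f)" "ideal2 (e * f) = ideal2 e" using rectD[OF rect assms(2) assms(2) assms(3) refl assms(4)] by auto
  have 2: "idem (e * f * e)" "ideal2 (e * f * e) = ideal2 e" using rectD[OF rect assms(2) 1(1) assms(2) 1(2) refl] by auto
  show ?thesis
  proof (rule idem_below_eq[OF assms(2) 2(1)])
    show "e * f * e = e * (e * f * e)" using assms(2) by (simp add: idemD2 mult.assoc)
    show "e * f * e = e * f * e * e" using assms(2) by (simp add: idemD mult.assoc)
    show "e \<in> ideal2 (e * f * e)" using 2(2) ideal2_self[of e] by simp
  qed
qed

lemma rect_right_invertible:
  fixes e r t :: "'m::{monoid_mult,finite}"
  assumes rect: "rectangular TYPE('m)" and e: "idem e" and r: "e * r = r" and rt: "r * t = e"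
  shows "e \<in> ideal2 (r * e)"
proof -
  define f where "f = t * r"
  have "f * f = t * (r * t) * r" by (simp add: f_def mult.assoc)
  also have "\<dots> = f" using rt r by (simp add: f_def mult.assoc)
  finally have fi: "idem f" by (simp add: idem_def)
  have "e = (r * t) * (r * t)" using rt e by (simp add: idemD)
  also have "\<dots> = r * f * t" by (simp add: f_def mult.assoc)
  finally have a: "e \<in> ideal2 f" by (rule ideal2_I)
  have b: "f \<in> ideal2 e" unfolding f_def using r by (intro ideal2_I[of _ t _ r]) (simp add: mult.assoc)
  have "e * f * e = e" by (rule rect_idem_sandwich[OF rect e fi ideal2_eqI[OF b a]])
  then have "e = (e * t) * (r * e) * 1" by (simp add: f_def mult.assoc)
  then show ?thesis by (rule ideal2_I)
qed

lemma rect_left_invertible: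
  fixes e r t :: "'m::{monoid_mult,finite}"
  assumes rect: "rectangular TYPE('m)" and e: "idem e" and r: "r * e = r" and rt: "t * r = e"
  shows "e \<in> ideal2 (e * r)"
proof -
  define f where "f = r * t"
  have "f * f = r * (t * r) * t" by (simp add: f_def mult.assoc)
  also have "\<dots> = f" using rt r by (simp add: f_def mult.assoc)
  finally have fi: "idem f" by (simp add: idem_def)
  have "e = (t * r) * (t * r)" using rt e by (simp add: idemD)
  also have "\<dots> = t * f * r" by (simp add: f_def mult.assoc)
  finally have a: "e \<in> ideal2 f" by (rule ideal2_I)
  have b: "f \<in> ideal2 e" unfolding f_def using r by (intro ideal2_I[of _ r _ t]) (simp add: mult.assoc)
  have "e * f * e = e" by (rule rect_idem_sandwich[OF rect e fi ideal2_eqI[OF b a]])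
  then have "e = 1 * (e * r) * (t * e)" by (simp add: f_def mult.assoc)
  then show ?thesis by (rule ideal2_I)
qed

lemma idem_ideal2_eq_left:
  fixes e q :: "'m::monoid_mult"
  assumes eq: "e * q = q" and qe: "q * e = e"
  shows "idem q" "ideal2 q = ideal2 e"
proof -
  have "q * q = (q * e) * q" using eq by (simp add: mult.assoc)
  then show "idem q" using eq qe by (simp add: idem_def)
  have "q = 1 * e * q" "e = 1 * q * e" using eq qe by simp_all
  then show "ideal2 q = ideal2 e" by (intro ideal2_eqI ideal2_I)
qed

lemma idem_ideal2_eq_right:
  fixes e p :: "'m::monoid_mult"
  assumes pe: "p * e = p" and ep: "e * p = e"
  shows "idem p" "ideal2 p = ideal2 e"
proof -
  have "p * p = p * (e * p)" using pe by (metis mult.assoc)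
  then show "idem p" using pe ep by (simp add: idem_def)
  have "p = p * e * 1" "e = e * p * 1" using pe ep by simp_all
  then show "ideal2 p = ideal2 e" by (intro ideal2_eqI ideal2_I)
qed

lemma rect_corner_mult:
  fixes e m n :: "'m::{monoid_mult,finite}"
  assumes rect: "rectangular TYPE('m)" and e: "idem e"
    and g: "e * m * e \<in> Gunits e" and h: "e * n * e \<in> Gunits e"
  shows "e * (m * n) * e = (e * m * e) * (e * n * e)"
proof -
  have ee: "e * e = e" "\<And>x. e * (e * x) = e * x" using e by (simp_all add: idemD idemD2)
  obtain g' where g': "e * g' = g'" "e * m * e * g' = e" "g' * (e * m * e) = e"
    using GunitsD(3)[OF g e] by blast
  obtain h' where h': "h' * e = h'" "e * n * e * h' = e" "h' * (e * n * e) = e"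
    using GunitsD(3)[OF h e] by blast
  define q where "q = g' * m"
  define p where "p = n * h'"
  have eq: "e * q = q" and qe: "q * e = e"
    using g' by (simp_all add: q_def mult.assoc[symmetric]) (metis mult.assoc)
  have pe: "p * e = p" and ep: "e * p = e"
    using h' by (simp_all add: p_def mult.assoc) (metis mult.assoc)
  \<comment> \<open>q and p are idempotents in the J-class of e, so rectangularity forces q p = e.\<close>
  have qp: "q * p = e"
  proof -
    note q = idem_ideal2_eq_left[OF eq qe] and p = idem_ideal2_eq_right[OF pe ep]
    have "idem (q * p)" "ideal2 (q * p) = ideal2 e" using rectD[OF rect e q(1) p(1) q(2) p(2)] by auto
    moreover have "q * p = e * (q * p)" "q * p = q * p * e"
      using eq pe by (simp_all add: mult.assoc[symmetric]) (simp add: mult.assoc)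
    ultimately show ?thesis using idem_below_eq[OF e] ideal2_self[of e] by metis
  qed
  have "(e * m * e) * q = e * m"
    using g'(2) by (metis q_def mult.assoc mult_1_left)
  moreover have "p * (e * n * e) = n * e"
    using h'(3) by (metis p_def mult.assoc mult_1_right)
  ultimately have "e * (m * n) * e = ((e * m * e) * q) * (p * (e * n * e))"
    by (simp add: mult.assoc)
  also have "\<dots> = (e * m * e) * (q * p) * (e * n * e)" by (simp only: mult.assoc)
  also have "\<dots> = (e * m * e) * (e * n * e)" using qp ee by (simp add: mult.assoc)
  finally show ?thesis .
qed

lemma rect_corner_unit_factors:
  fixes e m n :: "'m::{monoid_mult,finite}"
  assumes rect: "rectangular TYPE('m)" and e: "idem e"
    and k: "e * (m * n) * e \<in> Gunits e"
  shows "e * m * e \<in> Gunits e" "e * n * e \<in> Gunits e"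
proof -
  have ee: "e * e = e" "\<And>x. e * (e * x) = e * x" using e by (simp_all add: idemD idemD2)
  obtain k' where k': "e * k' = k'" "k' * e = k'" "e * (m * n) * e * k' = e" "k' * (e * (m * n) * e) = e"
    using GunitsD(3)[OF k e] by blast
  have "(e * m) * (n * e * k') = e" using k'(3) by (simp add: mult.assoc)
  from rect_right_invertible[OF rect e _ this] have "e \<in> ideal2 (e * m * e)" using ee by (simp add: mult.assoc)
  then show "e * m * e \<in> Gunits e" using ee by (intro corner_unitI[OF e]) (simp_all add: mult.assoc)
  have "(k' * e * m) * (n * e) = e" using k'(4) by (simp add: mult.assoc)
  from rect_left_invertible[OF rect e _ this] have "e \<in> ideal2 (e * n * e)" using ee by (simp add: mult.assoc)
  then show "e * n * e \<in> Gunits e" using ee by (intro corner_unitI[OF e]) (simp_all add: mult.assoc)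
qed

lemma rect_corner_power_unit:
  fixes e m :: "'m::{monoid_mult,finite}"
  assumes rect: "rectangular TYPE('m)" and e: "idem e" and g: "e * m * e \<in> Gunits e"
  shows "e * m ^ Suc j * e \<in> Gunits e"
proof (induction j)
  case 0 then show ?case using g by simp
next
  case (Suc j)
  have "e * m ^ Suc (Suc j) * e = e * (m * m ^ Suc j) * e" by simp
  also have "\<dots> = (e * m * e) * (e * m ^ Suc j * e)" by (rule rect_corner_mult[OF rect e g Suc])
  finally show ?case using Gunits_mult[OF g Suc e] by simp
qed

lemma rect_corner_unit_of_ideal:
  fixes e f :: "'m::{monoid_mult,finite}"
  assumes rect: "rectangular TYPE('m)" and e: "idem e" and f: "idem f" and ef: "e \<in> ideal2 f"
  shows "e * f * e \<in> Gunits e"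
proof -
  have ee: "e * e = e" "\<And>x. e * (e * x) = e * x" using e by (simp_all add: idemD idemD2)
  have ff: "f * f = f" using f by (rule idemD)
  obtain x y where xy: "e = x * f * y" using ef by (auto elim: ideal2_E)
  define u where "u = e * x * f"
  define v where "v = f * y * e"
  have "u * v = e * (x * (f * f) * y) * e" by (simp add: u_def v_def mult.assoc)
  then have uv: "u * v = e" using ff xy ee by (simp add: mult.assoc)
  have ve: "v * e = v" and uf: "u * f = u" and fv: "f * v = v"
    using ee ff by (simp_all add: u_def v_def mult.assoc) (simp add: mult.assoc[symmetric])
  \<comment> \<open>p is an idempotent J-equivalent to e with f p f = p; rectangularity gives e p e = e,
    so e f has a right inverse.\<close>
  define p where "p = v * u"
  have "p * p = v * (u * v) * u" by (simp add: p_def mult.assoc)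
  then have p: "idem p" using uv ve by (simp add: p_def idem_def)
  have "e = u * p * v" using uv ee by (metis p_def mult.assoc)
  moreover have "p = v * e * u" using ve by (simp add: p_def)
  ultimately have "ideal2 p = ideal2 e" by (intro ideal2_eqI ideal2_I)
  then have epe: "e * p * e = e" by (rule rect_idem_sandwich[OF rect e p])
  have fpf: "f * p * f = p" using fv uf by (metis p_def mult.assoc)
  have "(e * f) * (p * f * e) = e * (f * p * f) * e" by (simp add: mult.assoc)
  then have "(e * f) * (p * f * e) = e" using fpf epe by simp
  from rect_right_invertible[OF rect e _ this] have "e \<in> ideal2 (e * f * e)"
    using ee by (simp add: mult.assoc)
  then show ?thesis using ee by (intro corner_unitI[OF e]) (simp_all add: mult.assoc)
qed

lemma sigma_ge_iff_corner_unit: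
  fixes e m :: "'m::{monoid_mult,finite}"
  assumes rect: "rectangular TYPE('m)" and e: "idem e"
  shows "sigma_ge m (ideal2 e) \<longleftrightarrow> e * m * e \<in> Gunits e"
proof -
  obtain k where k: "k > 0" "m ^ k = omega m" and f: "idem (omega m)"
    using omega_idem_power[of m] by blast
  have m_power: "e * omega m * e = e * (m * m ^ (k - 1)) * e"
    using k by (cases k) simp_all
  show ?thesis
  proof
    assume "sigma_ge m (ideal2 e)"
    then have "e \<in> ideal2 (omega m)" unfolding sigma_ge_def sigma_def using ideal2_self[of e] by blast
    from rect_corner_unit_of_ideal[OF rect e f this] show "e * m * e \<in> Gunits e"
      unfolding m_power by (rule rect_corner_unit_factors(1)[OF rect e])
  next
    assume "e * m * e \<in> Gunits e"
    from rect_corner_power_unit[OF rect e this, of "k - 1"]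
    have "e * omega m * e \<in> Gunits e" using k by simp
    then obtain h where "e * omega m * e * h = e" using GunitsD(3)[OF _ e] by blast
    then have "e = e * omega m * (e * h)" by (simp add: mult.assoc)
    then have "e \<in> ideal2 (omega m)" by (rule ideal2_I)
    then show "sigma_ge m (ideal2 e)"
      unfolding sigma_ge_def sigma_def using ideal2_subset_iff by blast
  qed
qed

lemma corner_unit_mult_iff:
  fixes e m n :: "'m::{monoid_mult,finite}"
  assumes rect: "rectangular TYPE('m)" and e: "idem e"
  shows "e * (m * n) * e \<in> Gunits e \<longleftrightarrow> e * m * e \<in> Gunits e \<and> e * n * e \<in> Gunits e"
proof
  assume "e * (m * n) * e \<in> Gunits e"
  then show "e * m * e \<in> Gunits e \<and> e * n * e \<in> Gunits e" using rect_corner_unit_factors[OF rect e] by blast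
next
  assume a: "e * m * e \<in> Gunits e \<and> e * n * e \<in> Gunits e"
  then have "(e * m * e) * (e * n * e) \<in> Gunits e" using Gunits_mult[OF _ _ e] by blast
  then show "e * (m * n) * e \<in> Gunits e" using rect_corner_mult[OF rect e] a by simp
qed

lemma nabla_not_sigma: "x \<in> nabla X \<Longrightarrow> \<not> sigma_ge (x::'m::{monoid_mult,finite}) X"
  unfolding nabla_def sigma_ge_def sigma_def
  using ideal2_mono[OF omega_in_ideal[of x]] by blast

lemma nabla_mult_right: "b \<in> nabla X \<Longrightarrow> a * b \<in> nabla (X::'m::monoid_mult set)"
proof -
  assume b: "b \<in> nabla X"
  have "a * b = a * b * 1" by simp
  then have "a * b \<in> ideal2 b" by (rule ideal2_I)
  then show ?thesis using b ideal2_mono unfolding nabla_def by blast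
qed

lemma kspan_closed:
  "(\<lambda>_. 0) \<in> kspan B" "u \<in> kspan B \<Longrightarrow> v \<in> kspan B \<Longrightarrow> (\<lambda>a. u a + v a) \<in> kspan B"
  "u \<in> kspan B \<Longrightarrow> (\<lambda>a. c * u a) \<in> kspan B" "B \<subseteq> kspan B"
  unfolding kspan_def by blast+

lemma kspan_induct:
  assumes "(\<lambda>_. 0) \<in> U" "\<And>u v. u \<in> U \<Longrightarrow> v \<in> U \<Longrightarrow> (\<lambda>a. u a + v a) \<in> U"
    "\<And>c u. u \<in> U \<Longrightarrow> (\<lambda>a. c * u a) \<in> U" "B \<subseteq> U"
  shows "kspan B \<subseteq> U"
  unfolding kspan_def by (rule Inter_lower) (use assms in simp)

lemma sim_gen_sub: "sim_gen eX eY \<subseteq> sim_rel eX eY"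
  unfolding sim_rel_def by blast

lemma sim_rel_invariant:
  assumes gen: "\<And>z z'. (z, z') \<in> sim_gen eX eY \<Longrightarrow> z \<in> corner eY eX \<and> z' \<in> corner eY eX \<and> \<kappa> z = \<kappa> z'"
    and "(z, z') \<in> sim_rel eX eY"
  shows "z \<in> corner eY eX \<and> z' \<in> corner eY eX \<and> \<kappa> z = \<kappa> z'"
proof -
  let ?E = "{(z, z'). z \<in> corner eY eX \<and> z' \<in> corner eY eX \<and> \<kappa> z = \<kappa> z'}"
  have "?E \<subseteq> corner eY eX \<times> corner eY eX" by auto
  moreover have "refl_on (corner eY eX) ?E" unfolding refl_on_def by auto
  moreover have "sym ?E" unfolding sym_def by auto
  moreover have "trans ?E" unfolding trans_def by auto
  ultimately have "equiv (corner eY eX) ?E" by (rule equivI)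
  moreover have "sim_gen eX eY \<subseteq> ?E" using gen by auto
  ultimately have "sim_rel eX eY \<subseteq> ?E" unfolding sim_rel_def by blast
  then show ?thesis using assms(2) by blast
qed

lemma sum_eq_0_fibrewise:
  assumes "finite A" and "\<And>t. t \<in> f ` A \<Longrightarrow> (\<Sum>a\<in>{a \<in> A. f a = t}. w a) = 0"
  shows "(\<Sum>a\<in>A. w a) = (0::'d::comm_monoid_add)"
proof -
  have "(\<Sum>a\<in>A. w a) = (\<Sum>t\<in>f ` A. \<Sum>a\<in>{a \<in> A. f a = t}. w a)"
    using assms(1) by (rule sum.image_gen)
  also have "\<dots> = 0" using assms(2) by simp
  finally show ?thesis .
qed

lemma sum_fibres_UNIV:
  fixes q :: "'b::finite \<Rightarrow> 'c::finite" and H :: "'b \<Rightarrow> 'c \<Rightarrow> 'd::comm_monoid_add"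
  shows "(\<Sum>b\<in>UNIV. (\<Sum>a\<in>{a. q a = b}. H a b)) = (\<Sum>a\<in>UNIV. H a (q a))"
proof -
  have "(\<Sum>b\<in>UNIV. (\<Sum>a\<in>{a. q a = b}. H a b)) = (\<Sum>b\<in>UNIV. (\<Sum>a\<in>{x. x \<in> UNIV \<and> q x = b}. H a (q a)))"
    by (intro sum.cong) auto
  also have "\<dots> = (\<Sum>a\<in>UNIV. H a (q a))" by (rule sum.group) auto
  finally show ?thesis .
qed

lemma sum_fibres:
  fixes q :: "'b::finite \<Rightarrow> 'c::finite" and H :: "'b \<Rightarrow> 'd::comm_monoid_add"
  shows "(\<Sum>b\<in>B. (\<Sum>a\<in>{a. q a = b}. H a)) = (\<Sum>a\<in>{a. q a \<in> B}. H a)"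
proof -
  have "(\<Sum>b\<in>B. (\<Sum>a\<in>{a. q a = b}. H a)) = (\<Sum>b\<in>B. (\<Sum>a\<in>{x. x \<in> {a. q a \<in> B} \<and> q x = b}. H a))"
    by (intro sum.cong) auto
  also have "\<dots> = (\<Sum>a\<in>{a. q a \<in> B}. H a)" by (rule sum.group) auto
  finally show ?thesis .
qed

section \<open>The bimodule structure on A\<close>

locale rect_bimodule =
  fixes eX eY :: "'m::{monoid_mult,finite}"
    and scale :: "'k::field \<Rightarrow> 'a::ab_group_add \<Rightarrow> 'a"
    and l :: "'m \<Rightarrow> 'a \<Rightarrow> 'a" and r :: "'a \<Rightarrow> 'm \<Rightarrow> 'a"
  assumes rect: "rectangular TYPE('m)"
    and idX: "idem eX" and idY: "idem eY"
    and XltY: "ideal2 eX \<subset> ideal2 eY"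
    and eXY: "eX * eY = eX" and eYX: "eY * eX = eX"
    and modA: "GG_module scale eX eY l r"

sublocale rect_bimodule \<subseteq> VS: vector_space scale
  using modA unfolding GG_module_def by blast

context rect_bimodule
begin

abbreviation "L \<equiv> bimodL eY l"
abbreviation "R \<equiv> bimodR eX r"
abbreviation "GX \<equiv> Gunits eX"
abbreviation "GY \<equiv> Gunits eY"
abbreviation "SX m \<equiv> sigma_ge m (ideal2 eX)"
abbreviation "SY m \<equiv> sigma_ge m (ideal2 eY)"

lemma eX_idem: "eX * eX = eX" "eX * (eX * x) = eX * x" using idX by (simp_all add: idemD idemD2)
lemma eY_idem: "eY * eY = eY" "eY * (eY * x) = eY * x" using idY by (simp_all add: idemD idemD2)
lemma eX_eY_absorb: "eX * (eY * x) = eX * x" "eY * (eX * x) = eX * x"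
  using eXY eYX by (simp_all add: mult.assoc[symmetric])

lemma SX_iff_unit: "SX m \<longleftrightarrow> eX * m * eX \<in> GX" by (rule sigma_ge_iff_corner_unit[OF rect idX])
lemma SY_iff_unit: "SY m \<longleftrightarrow> eY * m * eY \<in> GY" by (rule sigma_ge_iff_corner_unit[OF rect idY])

lemma SX_mult: "SX (m * n) \<longleftrightarrow> SX m \<and> SX n"
  unfolding SX_iff_unit using corner_unit_mult_iff[OF rect idX] by simp
lemma SY_mult: "SY (m * n) \<longleftrightarrow> SY m \<and> SY n"
  unfolding SY_iff_unit using corner_unit_mult_iff[OF rect idY] by simp

lemma rhoX_mult: "SX m \<Longrightarrow> SX n \<Longrightarrow> eX * (m * n) * eX = (eX * m * eX) * (eX * n * eX)"
  unfolding SX_iff_unit by (rule rect_corner_mult[OF rect idX])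
lemma rhoY_mult: "SY m \<Longrightarrow> SY n \<Longrightarrow> eY * (m * n) * eY = (eY * m * eY) * (eY * n * eY)"
  unfolding SY_iff_unit by (rule rect_corner_mult[OF rect idY])

lemma SX_eX: "SX eX" unfolding SX_iff_unit using Gunits_one[OF idX] eX_idem by (simp add: mult.assoc)
lemma SY_eY: "SY eY" unfolding SY_iff_unit using Gunits_one[OF idY] eY_idem by (simp add: mult.assoc)
lemma SX_eY: "SX eY" unfolding SX_iff_unit using Gunits_one[OF idX] eXY eX_idem by (simp add: mult.assoc)

lemma eY_notin_ideal_eX: "\<not> eY \<in> ideal2 eX"
  using XltY ideal2_subset_iff by blast

lemma ideal_eX_not_SY: assumes "z \<in> ideal2 eX" shows "\<not> SY z"
proof
  assume "SY z"
  then have "eY * z * eY \<in> GY" by (simp add: SY_iff_unit)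
  then obtain h where "eY * z * eY * h = eY" using GunitsD(3)[OF _ idY] by blast
  then have "eY = (eY) * z * (eY * h)" by (simp add: mult.assoc)
  then have "eY \<in> ideal2 z" by (rule ideal2_I)
  then have "eY \<in> ideal2 eX" using ideal2_mono[OF assms] by blast
  then show False using eY_notin_ideal_eX by simp
qed

lemma not_SY_eX: "\<not> SY eX" using ideal_eX_not_SY ideal2_self by blast

lemma SY_SX: assumes "SY m" shows "SX m"
  using assms XltY unfolding sigma_ge_def by blast

lemma corner_iff: "z \<in> corner eY eX \<longleftrightarrow> eY * z * eX = z"
proof
  assume "z \<in> corner eY eX"
  then obtain m where "z = eY * m * eX" unfolding corner_def by blast
  then show "eY * z * eX = z" using eX_idem eY_idem by (simp add: mult.assoc)
qed (rule cornerI)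

lemma corner_not_SY: assumes "z \<in> corner eY eX" shows "\<not> SY z"
proof -
  have "z = eY * z * eX" using assms corner_iff by simp
  then have "z = (eY * z) * eX * 1" by (simp add: mult.assoc)
  then have "z \<in> ideal2 eX" by (rule ideal2_I)
  then show ?thesis by (rule ideal_eX_not_SY)
qed

lemma GY_SY: "g \<in> GY \<Longrightarrow> SY g" unfolding SY_iff_unit using GunitsD(1,2)[OF _ idY] by (simp add: mult.assoc)
lemma GX_SX: "g \<in> GX \<Longrightarrow> SX g" unfolding SX_iff_unit using GunitsD(1,2)[OF _ idX] by (simp add: mult.assoc)

lemma lin_l: "g \<in> GY \<Longrightarrow> l g (a + b) = l g a + l g b" "g \<in> GY \<Longrightarrow> l g (scale c a) = scale c (l g a)"
  using modA unfolding GG_module_def by blast+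
lemma lin_r: "h \<in> GX \<Longrightarrow> r (a + b) h = r a h + r b h" "h \<in> GX \<Longrightarrow> r (scale c a) h = scale c (r a h)"
  using modA unfolding GG_module_def by blast+
lemma l_one: "l eY a = a" and r_one: "r a eX = a"
  using modA unfolding GG_module_def by blast+
lemma l_mult: "g \<in> GY \<Longrightarrow> g' \<in> GY \<Longrightarrow> l (g * g') a = l g (l g' a)"
  using modA unfolding GG_module_def by blast
lemma r_mult: "h \<in> GX \<Longrightarrow> h' \<in> GX \<Longrightarrow> r a (h * h') = r (r a h) h'"
  using modA unfolding GG_module_def by blast
lemma lr_comm: "g \<in> GY \<Longrightarrow> h \<in> GX \<Longrightarrow> l g (r a h) = r (l g a) h"
  using modA unfolding GG_module_def by blast

lemma l_zero: "g \<in> GY \<Longrightarrow> l g 0 = 0"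
  using lin_l(1)[of g 0 0] by simp
lemma r_zero: "h \<in> GX \<Longrightarrow> r 0 h = 0"
  using lin_r(1)[of h 0 0] by simp
lemma l_minus: "g \<in> GY \<Longrightarrow> l g (- a) = - l g a"
  using lin_l(1)[of g a "- a"] l_zero[of g] by (metis add.commute eq_neg_iff_add_eq_0 add.right_inverse)
lemma r_minus: "h \<in> GX \<Longrightarrow> r (- a) h = - r a h"
  using lin_r(1)[of h a "- a"] r_zero[of h] by (metis add.commute eq_neg_iff_add_eq_0 add.right_inverse)

lemma L_eq: "L m a = (if SY m then l (eY * m * eY) a else 0)" by (simp add: bimodL_def)
lemma R_eq: "R a m = (if SX m then r a (eX * m * eX) else 0)" by (simp add: bimodR_def)

lemma L_add: "L m (a + b) = L m a + L m b"
  by (simp add: L_eq lin_l SY_iff_unit)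
lemma L_scale: "L m (scale c a) = scale c (L m a)"
  by (simp add: L_eq lin_l SY_iff_unit)
lemma L_zero: "L m 0 = 0"
  by (simp add: L_eq l_zero SY_iff_unit)
lemma L_minus: "L m (- a) = - L m a"
  by (simp add: L_eq l_minus SY_iff_unit)
lemma L_diff: "L m (a - b) = L m a - L m b"
  using L_add[of m a "- b"] L_minus by simp
lemma R_add: "R (a + b) m = R a m + R b m"
  by (simp add: R_eq lin_r SX_iff_unit)
lemma R_scale: "R (scale c a) m = scale c (R a m)"
  by (simp add: R_eq lin_r SX_iff_unit)
lemma R_zero: "R 0 m = 0"
  by (simp add: R_eq r_zero SX_iff_unit)
lemma R_minus: "R (- a) m = - R a m"
  by (simp add: R_eq r_minus SX_iff_unit)
lemma R_diff: "R (a - b) m = R a m - R b m"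
  using R_add[of a "- b"] R_minus by simp

lemma L_eY: "L eY a = a" using SY_eY eY_idem l_one by (simp add: L_eq mult.assoc)
lemma L_eX: "L eX a = 0" using not_SY_eX by (simp add: L_eq)
lemma R_eX: "R a eX = a" using SX_eX eX_idem r_one by (simp add: R_eq mult.assoc)
lemma R_eY: "R a eY = a" using SX_eY eX_idem eXY r_one by (simp add: R_eq mult.assoc)

lemma L_mult: "L (m * n) a = L m (L n a)"
proof -
  consider "SY m" "SY n" | "\<not> SY n" | "\<not> SY m" by blast
  then show ?thesis
  proof cases
    case 1
    then have g: "eY * m * eY \<in> GY" "eY * n * eY \<in> GY" using SY_iff_unit by auto
    have "SY (m * n)" using 1 SY_mult by simp
    then show ?thesis using 1 l_mult[OF g, of a] rhoY_mult[OF 1] by (simp add: L_eq)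
  next
    case 2
    then have "\<not> SY (m * n)" using SY_mult by simp
    then show ?thesis using 2 L_zero[of m] by (simp add: L_eq)
  next
    case 3
    then have "\<not> SY (m * n)" using SY_mult by simp
    then show ?thesis using 3 by (simp add: L_eq)
  qed
qed

lemma R_mult: "R a (m * n) = R (R a m) n"
proof -
  consider "SX m" "SX n" | "\<not> SX n" | "\<not> SX m" by blast
  then show ?thesis
  proof cases
    case 1
    then have g: "eX * m * eX \<in> GX" "eX * n * eX \<in> GX" using SX_iff_unit by auto
    have "SX (m * n)" using 1 SX_mult by simp
    then show ?thesis using 1 r_mult[OF g, of a] rhoX_mult[OF 1] by (simp add: R_eq)
  next
    case 2
    then have "\<not> SX (m * n)" using SX_mult by simp
    then show ?thesis using 2 by (simp add: R_eq)
  next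
    case 3
    then have "\<not> SX (m * n)" using SX_mult by simp
    then show ?thesis using 3 R_zero[of n] by (simp add: R_eq)
  qed
qed

lemma LR_comm: "L m (R a n) = R (L m a) n"
proof -
  consider "SY m" "SX n" | "\<not> SY m" | "\<not> SX n" by blast
  then show ?thesis
  proof cases
    case 1
    then have g: "eY * m * eY \<in> GY" "eX * n * eX \<in> GX" using SX_iff_unit SY_iff_unit by auto
    then show ?thesis using 1 lr_comm[OF g, of a] by (simp add: L_eq R_eq)
  next
    case 2
    then show ?thesis using R_zero[of n] by (simp add: L_eq)
  next
    case 3
    then show ?thesis using L_zero[of m] by (simp add: R_eq)
  qed
qed

definition inner_der :: "'a \<Rightarrow> 'm \<Rightarrow> 'a" where "inner_der b = (\<lambda>m. L m b - R b m)"
definition eval_der :: "('m \<Rightarrow> 'a) \<Rightarrow> ('m \<Rightarrow> 'k) \<Rightarrow> 'a" where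
  "eval_der d c = (\<Sum>a\<in>UNIV. scale (c a) (d a))"

lemma DerD: "d \<in> Der L R \<Longrightarrow> d (m * n) = L m (d n) + R (d m) n"
  unfolding Der_def by blast

lemma Der_eY_zero: assumes "d \<in> Der L R" shows "d eY = 0"
proof -
  have "d eY = d (eY * eY)" using eY_idem by simp
  also have "\<dots> = d eY + d eY" using DerD[OF assms] L_eY R_eY by simp
  finally show ?thesis by simp
qed

lemma Der_mult_eX: "d \<in> Der L R \<Longrightarrow> d (x * eX) = L x (d eX) + d x"
  using DerD[of d x eX] R_eX by simp
lemma Der_eY_mult: "d \<in> Der L R \<Longrightarrow> d (eY * x) = d x"
  using DerD[of d eY x] L_eY Der_eY_zero[of d] R_zero by simp
lemma Der_eX_mult: "d \<in> Der L R \<Longrightarrow> d (eX * x) = R (d eX) x"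
  using DerD[of d eX x] L_eX by simp

lemma inner_der_Der: "inner_der b \<in> Der L R"
  unfolding Der_def inner_der_def
  by (auto simp: L_mult R_mult L_diff R_diff LR_comm)

lemma Der_add: "d \<in> Der L R \<Longrightarrow> d' \<in> Der L R \<Longrightarrow> (\<lambda>m. d m + d' m) \<in> Der L R"
  unfolding Der_def by (auto simp: L_add R_add)
lemma Der_diff: "d \<in> Der L R \<Longrightarrow> d' \<in> Der L R \<Longrightarrow> (\<lambda>m. d m - d' m) \<in> Der L R"
  unfolding Der_def by (auto simp: L_diff R_diff)

lemma inner_der_add: "inner_der (b + b') m = inner_der b m + inner_der b' m"
  unfolding inner_der_def by (simp add: L_add R_add)
lemma inner_der_minus: "inner_der (- b) m = - inner_der b m"
  unfolding inner_der_def by (simp add: L_minus R_minus)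
lemma inner_der_zero: "inner_der 0 m = 0"
  unfolding inner_der_def by (simp add: L_zero R_zero)

lemma eval_der_add: "eval_der d (\<lambda>a. c a + c' a) = eval_der d c + eval_der d c'"
  unfolding eval_der_def by (simp add: VS.scale_left_distrib sum.distrib)
lemma eval_der_scale: "eval_der d (\<lambda>a. t * c a) = scale t (eval_der d c)"
  unfolding eval_der_def by (simp add: VS.scale_sum_right)
lemma eval_der_diff: "eval_der d (\<lambda>a. c a - c' a) = eval_der d c - eval_der d c'"
  unfolding eval_der_def by (simp add: VS.scale_left_diff_distrib sum_subtractf)
lemma eval_der_zero: "eval_der d (\<lambda>a. 0) = 0"
  unfolding eval_der_def by simp
lemma eval_der_add_der: "eval_der (\<lambda>m. d m + d' m) c = eval_der d c + eval_der d' c"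
  unfolding eval_der_def by (simp add: VS.scale_right_distrib sum.distrib)
lemma eval_der_scale_der: "eval_der (\<lambda>m. scale t (d m)) c = scale t (eval_der d c)"
  unfolding eval_der_def by (simp add: VS.scale_sum_right mult.commute)
lemma eval_der_delta: "eval_der d (delta z) = d z"
proof -
  have "eval_der d (delta z) = (\<Sum>a\<in>UNIV. if a = z then d a else 0)"
    unfolding eval_der_def delta_def by (rule sum.cong) auto
  then show ?thesis by simp
qed

section \<open>Inner derivations vanish on the kernel of \<open>\<rho>\<^sub>X\<close>\<close>

abbreviation "rho c \<equiv> rhoX_lin eX eY c"
abbreviation "C \<equiv> corner eY eX"

lemma rho_add: "rho (\<lambda>a. c a + c' a) g = rho c g + rho c' g"
  unfolding rhoX_lin_def by (simp add: sum.distrib)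
lemma rho_scale: "rho (\<lambda>a. t * c a) g = t * rho c g"
  unfolding rhoX_lin_def by (simp add: sum_distrib_left)
lemma rho_diff: "rho (\<lambda>a. c a - c' a) g = rho c g - rho c' g"
  unfolding rhoX_lin_def by (simp add: sum_subtractf)
lemma rho_zero: "rho (\<lambda>a. 0) g = 0"
  unfolding rhoX_lin_def by simp
lemma rho_delta: "rho (delta z) g = (if z \<in> C \<and> SX z \<and> eX * z * eX = g then 1 else 0)"
proof -
  have "rho (delta z) g = (\<Sum>a\<in>{a \<in> C. SX a \<and> eX * a * eX = g}. if a = z then 1 else 0)"
    unfolding rhoX_lin_def delta_def by (rule sum.cong) auto
  then show ?thesis by simp
qed

lemma freeS_iff: "c \<in> freeS eX eY \<longleftrightarrow> (\<forall>a. a \<notin> C \<longrightarrow> c a = 0)"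
  unfolding freeS_def by simp

lemma rhoX_fibre:
  assumes A: "A \<subseteq> {a \<in> C. SX a}"
    and cl: "\<And>a a'. a \<in> A \<Longrightarrow> a' \<in> C \<Longrightarrow> SX a' \<Longrightarrow> eX * a' * eX = eX * a * eX \<Longrightarrow> a' \<in> A"
    and t: "t \<in> (\<lambda>a. eX * a * eX) ` A"
  shows "{a \<in> A. eX * a * eX = t} = {a \<in> C. SX a \<and> eX * a * eX = t}"
  using A cl t by blast

lemma sum_rhoX_fibres:
  assumes rz: "rho c = (\<lambda>_. 0)"
    and A: "A \<subseteq> {a \<in> C. SX a}"
    and cl: "\<And>a a'. a \<in> A \<Longrightarrow> a' \<in> C \<Longrightarrow> SX a' \<Longrightarrow> eX * a' * eX = eX * a * eX \<Longrightarrow> a' \<in> A"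
  shows "(\<Sum>a\<in>A. c a) = 0"
proof (rule sum_eq_0_fibrewise[where f = "\<lambda>a. eX * a * eX"])
  fix t assume "t \<in> (\<lambda>a. eX * a * eX) ` A"
  then show "(\<Sum>a\<in>{a \<in> A. eX * a * eX = t}. c a) = 0"
    using rz rhoX_fibre[OF A cl] by (simp add: rhoX_lin_def fun_eq_iff)
qed simp

lemma sum_scale_rhoX_fibres:
  assumes rz: "rho c = (\<lambda>_. 0)"
    and A: "A \<subseteq> {a \<in> C. SX a}"
    and cl: "\<And>a a'. a \<in> A \<Longrightarrow> a' \<in> C \<Longrightarrow> SX a' \<Longrightarrow> eX * a' * eX = eX * a * eX \<Longrightarrow> a' \<in> A"
  shows "(\<Sum>a\<in>A. scale (c a) (G (eX * a * eX))) = 0"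
proof (rule sum_eq_0_fibrewise[where f = "\<lambda>a. eX * a * eX"])
  fix t assume t: "t \<in> (\<lambda>a. eX * a * eX) ` A"
  have "(\<Sum>a\<in>{a \<in> A. eX * a * eX = t}. scale (c a) (G (eX * a * eX)))
      = scale (\<Sum>a\<in>{a \<in> A. eX * a * eX = t}. c a) (G t)"
    by (simp add: VS.scale_sum_left)
  also have "\<dots> = scale (rho c t) (G t)"
    using rhoX_fibre[OF A cl t] by (simp add: rhoX_lin_def)
  finally show "(\<Sum>a\<in>{a \<in> A. eX * a * eX = t}. scale (c a) (G (eX * a * eX))) = 0"
    using rz by simp
qed simp

lemma sum_scale_R_kernel:
  assumes "c \<in> freeS eX eY" "rho c = (\<lambda>_. 0)"
  shows "(\<Sum>a\<in>UNIV. scale (c a) (R b a)) = 0"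
proof -
  let ?A = "{a \<in> C. SX a}"
  have "(\<Sum>a\<in>UNIV. scale (c a) (R b a)) = (\<Sum>a\<in>UNIV. if a \<in> ?A then scale (c a) (r b (eX * a * eX)) else 0)"
    using assms(1) by (intro sum.cong) (auto simp: freeS_iff R_eq)
  also have "\<dots> = (\<Sum>a\<in>?A. scale (c a) (r b (eX * a * eX)))"
    by (simp add: sum.inter_filter[symmetric])
  also have "\<dots> = 0" by (rule sum_scale_rhoX_fibres[OF assms(2)]) auto
  finally show ?thesis .
qed

lemma eval_inner_der_kernel:
  assumes "c \<in> freeS eX eY" "rho c = (\<lambda>_. 0)"
  shows "eval_der (inner_der b) c = 0"
proof -
  have "eval_der (inner_der b) c = (\<Sum>a\<in>UNIV. scale (c a) (L a b)) - (\<Sum>a\<in>UNIV. scale (c a) (R b a))"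
    unfolding eval_der_def inner_der_def by (simp add: VS.scale_right_diff_distrib sum_subtractf)
  also have "(\<Sum>a\<in>UNIV. scale (c a) (L a b)) = 0"
    using assms(1) corner_not_SY by (intro sum.neutral) (auto simp: freeS_iff L_eq)
  finally show ?thesis using sum_scale_R_kernel[OF assms] by simp
qed

section \<open>Derivations respect the relations defining W\<close>

abbreviation "Z \<equiv> (Zsub eX eY :: ('m \<Rightarrow> 'k) set)"
abbreviation "N2 \<equiv> nabla2 (ideal2 eY) (ideal2 eX)"

lemma Zsub_closed:
  "(\<lambda>_. 0) \<in> Z" "u \<in> Z \<Longrightarrow> v \<in> Z \<Longrightarrow> (\<lambda>a. u a + v a) \<in> Z"
  "u \<in> Z \<Longrightarrow> (\<lambda>a. c * u a) \<in> Z"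
  unfolding Zsub_def by (simp_all add: kspan_closed(1-3))

lemma delta_nabla2_in_Zsub: "z \<in> N2 \<Longrightarrow> z \<in> C \<Longrightarrow> delta z \<in> Z"
  unfolding Zsub_def by (rule subsetD[OF kspan_closed(4)]) blast

lemma delta_diff_sim_in_Zsub: "(z, z') \<in> sim_rel eX eY \<Longrightarrow> (\<lambda>a. delta z a - delta z' a) \<in> Z"
  unfolding Zsub_def by (rule subsetD[OF kspan_closed(4)]) blast

lemma Zsub_induct:
  assumes "(\<lambda>_. 0) \<in> U" "\<And>u v. u \<in> U \<Longrightarrow> v \<in> U \<Longrightarrow> (\<lambda>a. u a + v a) \<in> U"
    "\<And>c u. u \<in> U \<Longrightarrow> (\<lambda>a. c * u a) \<in> U"
    "\<And>z. z \<in> N2 \<Longrightarrow> z \<in> C \<Longrightarrow> delta z \<in> U"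
    "\<And>z z'. (z, z') \<in> sim_rel eX eY \<Longrightarrow> (\<lambda>a. delta z a - delta z' a) \<in> U"
  shows "Z \<subseteq> U"
  unfolding Zsub_def by (rule kspan_induct[OF assms(1-3)]) (auto intro: assms(4,5))

lemma Zsub_minus: "u \<in> Z \<Longrightarrow> (\<lambda>a. - u a) \<in> Z"
  using Zsub_closed(3)[of u "-1"] by simp

lemma nabla2_not_SX: assumes "z \<in> N2" shows "\<not> SX z"
proof -
  obtain a b where ab: "z = a * b" "b \<in> nabla (ideal2 eX)"
    using assms unfolding nabla2_def by blast
  then have "z \<in> nabla (ideal2 eX)" using nabla_mult_right by simp
  then show ?thesis by (rule nabla_not_sigma)
qed

lemma Der_nabla2_zero: assumes "d \<in> Der L R" "z \<in> N2" shows "d z = 0"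
proof -
  obtain a b where ab: "z = a * b" "a \<in> nabla (ideal2 eY)" "b \<in> nabla (ideal2 eX)"
    using assms(2) unfolding nabla2_def by blast
  have "\<not> SY a" "\<not> SX b" using ab nabla_not_sigma by blast+
  then show ?thesis using DerD[OF assms(1), of a b] ab(1) by (simp add: L_eq R_eq)
qed

lemma YX_corner: "eY * w * eX \<in> C"
  unfolding corner_iff by (simp add: mult.assoc eX_idem eY_idem)

lemma sim_gen_corner:
  assumes "(z, z') \<in> sim_gen eX eY"
  shows "z \<in> C \<and> z' \<in> C"
  using assms unfolding sim_gen_def
proof (elim UnE CollectE exE conjE)
  fix m n assume "(z, z') = (eY * m * n * eX, eY * m * eY * n * eX)"
  then have zz: "z = eY * (m * n) * eX" "z' = eY * (m * eY * n) * eX" by (simp_all add: mult.assoc)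
  show ?thesis unfolding zz by (simp add: YX_corner)
next
  fix m n assume "(z, z') = (eY * m * n * eX, eY * m * eX * n * eX)"
  then have zz: "z = eY * (m * n) * eX" "z' = eY * (m * eX * n) * eX" by (simp_all add: mult.assoc)
  show ?thesis unfolding zz by (simp add: YX_corner)
next
  fix a b assume "(z, z') = (a, b)" "a \<in> N2 \<inter> C" "b \<in> N2 \<inter> C"
  then show ?thesis by simp
qed

lemma sim_rel_corner: "(z, z') \<in> sim_rel eX eY \<Longrightarrow> z \<in> C \<and> z' \<in> C"
  using sim_rel_invariant[where \<kappa> = "\<lambda>_. ()"] sim_gen_corner by blast

lemma sim_rel_preserves:
  assumes s: "(z, z') \<in> sim_rel eX eY"
    and insert_eY: "\<And>m n. \<kappa> (eY * (m * n) * eX) = \<kappa> (eY * (m * (eY * n)) * eX)"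
    and insert_eX: "\<And>m n. \<not> SY m \<Longrightarrow> \<kappa> (eY * (m * n) * eX) = \<kappa> (eY * (m * (eX * n)) * eX)"
    and nabla2: "\<And>z z'. z \<in> N2 \<Longrightarrow> z' \<in> N2 \<Longrightarrow> \<kappa> z = \<kappa> z'"
  shows "\<kappa> z = \<kappa> z'"
proof -
  have "z \<in> C \<and> z' \<in> C \<and> \<kappa> z = \<kappa> z'"
  proof (rule sim_rel_invariant[OF _ s])
    fix z z' assume g: "(z, z') \<in> sim_gen eX eY"
    have "\<kappa> z = \<kappa> z'" using g unfolding sim_gen_def
    proof (elim UnE CollectE exE conjE)
      fix m n assume "(z, z') = (eY * m * n * eX, eY * m * eY * n * eX)"
      then show ?thesis using insert_eY[of m n] by (simp add: mult.assoc)
    next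
      fix m n assume "(z, z') = (eY * m * n * eX, eY * m * eX * n * eX)" "\<not> SY m"
      then show ?thesis using insert_eX[of m n] by (simp add: mult.assoc)
    next
      fix a b assume "(z, z') = (a, b)" "a \<in> N2 \<inter> C" "b \<in> N2 \<inter> C"
      then show ?thesis using nabla2 by simp
    qed
    then show "z \<in> C \<and> z' \<in> C \<and> \<kappa> z = \<kappa> z'" using sim_gen_corner[OF g] by blast
  qed
  then show ?thesis by blast
qed

definition keyX :: "'m \<Rightarrow> 'm option" where
  "keyX z = (if SX z then Some (eX * z * eX) else None)"

lemma keyX_YX: "keyX (eY * w * eX) = keyX w"
proof -
  have e: "eX * (eY * w * eX) * eX = eX * w * eX" by (simp add: mult.assoc eX_idem eX_eY_absorb)
  show ?thesis unfolding keyX_def SX_iff_unit e ..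
qed

lemma keyX_ins:
  assumes f: "SX f" "eX * f * eX = eX"
  shows "keyX (m * (f * n)) = keyX (m * n)"
proof -
  have "eX * (m * (f * n)) * eX = eX * (m * n) * eX" if "SX m" "SX n"
  proof -
    have "eX * (f * n) * eX = (eX * f * eX) * (eX * n * eX)" using rhoX_mult[OF f(1) that(2)] .
    also have "\<dots> = eX * n * eX" using f(2) eX_idem by (simp add: mult.assoc)
    finally show ?thesis
      using rhoX_mult[OF that] rhoX_mult[OF that(1)] SX_mult f(1) that(2) by simp
  qed
  then show ?thesis unfolding keyX_def using SX_mult f(1) by auto
qed

lemma sim_rel_keyX:
  assumes "(z, z') \<in> sim_rel eX eY"
  shows "keyX z = keyX z'"
  using assms
proof (rule sim_rel_preserves)
  fix m n
  show "keyX (eY * (m * n) * eX) = keyX (eY * (m * (eY * n)) * eX)"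
    using keyX_ins[OF SX_eY] eXY eX_idem by (simp add: keyX_YX)
  show "keyX (eY * (m * n) * eX) = keyX (eY * (m * (eX * n)) * eX)"
    using keyX_ins[OF SX_eX] eX_idem by (simp add: keyX_YX)
next
  fix z z' assume "z \<in> N2" "z' \<in> N2"
  then show "keyX z = keyX z'" using nabla2_not_SX by (simp add: keyX_def)
qed

lemma rhoX_Zsub: "u \<in> Z \<Longrightarrow> rho u = (\<lambda>_. 0)"
proof -
  assume u: "u \<in> Z"
  have "Z \<subseteq> {u. rho u = (\<lambda>_. 0)}"
  proof (rule Zsub_induct)
    show "(\<lambda>_. 0) \<in> {u. rho u = (\<lambda>_. 0)}" using rho_zero by auto
    show "(\<lambda>a. u a + v a) \<in> {u. rho u = (\<lambda>_. 0)}" if "u \<in> {u. rho u = (\<lambda>_. 0)}" "v \<in> {u. rho u = (\<lambda>_. 0)}" for u v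
      using that rho_add[of u v] by auto
    show "(\<lambda>a. c * u a) \<in> {u. rho u = (\<lambda>_. 0)}" if "u \<in> {u. rho u = (\<lambda>_. 0)}" for c u
      using that rho_scale[of c u] by auto
    show "delta z \<in> {u. rho u = (\<lambda>_. 0)}" if "z \<in> N2" "z \<in> C" for z
      using that nabla2_not_SX by (auto simp: rho_delta)
    show "(\<lambda>a. delta z a - delta z' a) \<in> {u. rho u = (\<lambda>_. 0)}" if s: "(z, z') \<in> sim_rel eX eY" for z z'
    proof -
      have "SX z = SX z'" and "SX z \<Longrightarrow> eX * z * eX = eX * z' * eX"
        using sim_rel_keyX[OF s] unfolding keyX_def by (auto split: if_splits)
      then show ?thesis using sim_rel_corner[OF s] by (auto simp: rho_diff rho_delta)
    qed
  qed
  then show ?thesis using u by blast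
qed

lemma Der_eY_eX: assumes "d \<in> Der L R" "d eX = 0" shows "d (eY * w * eX) = d w"
  using Der_mult_eX[OF assms(1), of "eY * w"] Der_eY_mult[OF assms(1)] assms(2) L_zero by simp

lemma Der_sim:
  assumes d: "d \<in> Der L R" "d eX = 0" and s: "(z, z') \<in> sim_rel eX eY"
  shows "d z = d z'"
  using s
proof (rule sim_rel_preserves)
  fix m n
  have "d (m * (eY * n)) = L m (d (eY * n)) + R (d m) (eY * n)" by (rule DerD[OF d(1)])
  also have "\<dots> = L m (d n) + R (d m) n" using Der_eY_mult[OF d(1)] R_mult R_eY by simp
  also have "\<dots> = d (m * n)" by (rule DerD[OF d(1), symmetric])
  finally show "d (eY * (m * n) * eX) = d (eY * (m * (eY * n)) * eX)"
    by (simp add: Der_eY_eX[OF d])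
  assume ns: "\<not> SY m"
  have "d (m * (eX * n)) = R (d m) n"
    using DerD[OF d(1), of m "eX * n"] ns R_mult R_eX by (simp add: L_eq)
  moreover have "d (m * n) = R (d m) n" using DerD[OF d(1), of m n] ns by (simp add: L_eq)
  ultimately show "d (eY * (m * n) * eX) = d (eY * (m * (eX * n)) * eX)"
    by (simp add: Der_eY_eX[OF d])
next
  fix z z' assume "z \<in> N2" "z' \<in> N2"
  then show "d z = d z'" using Der_nabla2_zero[OF d(1)] by simp
qed

lemma eval_der_Zsub:
  assumes d: "d \<in> Der L R" "d eX = 0" and u: "u \<in> Z"
  shows "eval_der d u = 0"
proof -
  have "Z \<subseteq> {u. eval_der d u = 0}"
  proof (rule Zsub_induct)
    show "(\<lambda>_. 0) \<in> {u. eval_der d u = 0}" using eval_der_zero by auto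
    show "(\<lambda>a. u a + v a) \<in> {u. eval_der d u = 0}" if "u \<in> {u. eval_der d u = 0}" "v \<in> {u. eval_der d u = 0}" for u v
      using that eval_der_add[of d u v] by auto
    show "(\<lambda>a. c * u a) \<in> {u. eval_der d u = 0}" if "u \<in> {u. eval_der d u = 0}" for c u
      using that eval_der_scale[of d c u] by auto
    show "delta z \<in> {u. eval_der d u = 0}" if "z \<in> N2" "z \<in> C" for z
      using that Der_nabla2_zero[OF d(1)] by (auto simp: eval_der_delta)
    show "(\<lambda>a. delta z a - delta z' a) \<in> {u. eval_der d u = 0}" if "(z, z') \<in> sim_rel eX eY" for z z'
      using Der_sim[OF d that] by (simp add: eval_der_diff eval_der_delta)
  qed
  then show ?thesis using u by blast
qed

section \<open>From derivations to homomorphisms V \<rightarrow> A\<close>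

abbreviation "W \<equiv> (Wclass eX eY :: ('m \<Rightarrow> 'k) \<Rightarrow> _)"
abbreviation "V \<equiv> (Vspace eX eY :: ('m \<Rightarrow> 'k) set set)"
abbreviation "F \<equiv> (freeS eX eY :: ('m \<Rightarrow> 'k) set)"

lemma Wclass_eq_iff: "W c = W c' \<longleftrightarrow> (\<lambda>a. c a - c' a) \<in> Z"
proof
  assume e: "W c = W c'"
  have "c \<in> W c" unfolding Wclass_def using Zsub_closed(1) by force
  then have "c \<in> W c'" using e by simp
  then obtain z where z: "z \<in> Z" "c = (\<lambda>a. c' a + z a)" unfolding Wclass_def by blast
  then have "(\<lambda>a. c a - c' a) = z" by auto
  then show "(\<lambda>a. c a - c' a) \<in> Z" using z by simp
next
  assume d: "(\<lambda>a. c a - c' a) \<in> Z"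
  have sub: "W x \<subseteq> W y" if "(\<lambda>a. x a - y a) \<in> Z" for x y
  proof
    fix w assume "w \<in> W x"
    then obtain z where z: "z \<in> Z" "w = (\<lambda>a. x a + z a)" unfolding Wclass_def by blast
    have zz: "(\<lambda>a. (x a - y a) + z a) \<in> Z" using Zsub_closed(2)[OF that z(1)] by simp
    have ww: "w = (\<lambda>a. y a + ((x a - y a) + z a))" using z(2) by auto
    show "w \<in> W y" unfolding Wclass_def
      by (rule CollectI, rule exI[of _ "\<lambda>a. (x a - y a) + z a"]) (use zz ww in simp)
  qed
  have "(\<lambda>a. c' a - c a) \<in> Z" using Zsub_minus[OF d] by simp
  then show "W c = W c'" using sub d by blast
qed

lemma Wclass_in_Vspace: "c \<in> F \<Longrightarrow> rho c = (\<lambda>_. 0) \<Longrightarrow> W c \<in> V"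
  unfolding Vspace_def by blast

lemma Vspace_rhoX: assumes "c \<in> F" "W c \<in> V" shows "rho c = (\<lambda>_. 0)"
proof -
  obtain c1 where c1: "W c = W c1" "c1 \<in> F" "rho c1 = (\<lambda>_. 0)"
    using assms(2) unfolding Vspace_def by blast
  have "(\<lambda>a. c a - c1 a) \<in> Z" using c1(1) Wclass_eq_iff by blast
  then have "rho (\<lambda>a. c a - c1 a) = (\<lambda>_. 0)" by (rule rhoX_Zsub)
  then show ?thesis using c1(3) rho_diff[of c c1] by (metis eq_iff_diff_eq_0)
qed

lemma VspaceE: assumes "v \<in> V" obtains c where "c \<in> F" "rho c = (\<lambda>_. 0)" "v = W c"
  using assms unfolding Vspace_def by blast

definition normalize_der :: "('m \<Rightarrow> 'a) \<Rightarrow> 'm \<Rightarrow> 'a" where "normalize_der d = (\<lambda>m. d m + inner_der (d eX) m)"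

lemma normalize_der_Der: "d \<in> Der L R \<Longrightarrow> normalize_der d \<in> Der L R"
  unfolding normalize_der_def by (rule Der_add[OF _ inner_der_Der])
lemma normalize_der_eX: "normalize_der d eX = 0"
  unfolding normalize_der_def inner_der_def by (simp add: L_eX R_eX)

lemma eval_normalize_der: assumes "c \<in> F" "rho c = (\<lambda>_. 0)" shows "eval_der (normalize_der d) c = eval_der d c"
  unfolding normalize_der_def eval_der_add_der using eval_inner_der_kernel[OF assms] by simp

lemma eval_der_Wclass_cong: assumes d: "d \<in> Der L R" and "c \<in> F" "rho c = (\<lambda>_. 0)" "c' \<in> F" "W c = W c'"
  shows "eval_der d c = eval_der d c'"
proof -
  have z: "(\<lambda>a. c a - c' a) \<in> Z" using assms(5) Wclass_eq_iff by blast
  have r': "rho c' = (\<lambda>_. 0)" using Vspace_rhoX[OF assms(4)] Wclass_in_Vspace[OF assms(2,3)] assms(5) by simp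
  have f: "(\<lambda>a. c a - c' a) \<in> F" using assms(2,4) by (simp add: freeS_iff)
  have r: "rho (\<lambda>a. c a - c' a) = (\<lambda>_. 0)" using assms(3) r' rho_diff[of c c'] by auto
  have "eval_der d (\<lambda>a. c a - c' a) = eval_der (normalize_der d) (\<lambda>a. c a - c' a)" using eval_normalize_der[OF f r] by simp
  also have "\<dots> = 0" using eval_der_Zsub[OF normalize_der_Der[OF d] normalize_der_eX z] .
  finally show ?thesis using eval_der_diff[of d c c'] by simp
qed

definition Vrep :: "('m \<Rightarrow> 'k) set \<Rightarrow> 'm \<Rightarrow> 'k" where
  "Vrep v = (SOME c. c \<in> F \<and> rho c = (\<lambda>_. 0) \<and> v = W c)"

lemma VrepD: assumes "v \<in> V" shows "Vrep v \<in> F" "rho (Vrep v) = (\<lambda>_. 0)" "v = W (Vrep v)"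
proof -
  obtain c where "c \<in> F" "rho c = (\<lambda>_. 0)" "v = W c" using VspaceE[OF assms] .
  then have "\<exists>c. c \<in> F \<and> rho c = (\<lambda>_. 0) \<and> v = W c" by blast
  then have "Vrep v \<in> F \<and> rho (Vrep v) = (\<lambda>_. 0) \<and> v = W (Vrep v)"
    unfolding Vrep_def by (rule someI_ex)
  then show "Vrep v \<in> F" "rho (Vrep v) = (\<lambda>_. 0)" "v = W (Vrep v)" by auto
qed

definition hom_of_der :: "('m \<Rightarrow> 'a) \<Rightarrow> ('m \<Rightarrow> 'k) set \<Rightarrow> 'a" where
  "hom_of_der d v = (if v \<in> V then eval_der d (Vrep v) else 0)"

lemma hom_of_der_Wclass:
  assumes d: "d \<in> Der L R" and c: "c \<in> F" "rho c = (\<lambda>_. 0)"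
  shows "hom_of_der d (W c) = eval_der d c"
proof -
  have v: "W c \<in> V" by (rule Wclass_in_Vspace[OF c])
  have "eval_der d c = eval_der d (Vrep (W c))"
    by (rule eval_der_Wclass_cong[OF d c VrepD(1)[OF v] VrepD(3)[OF v]])
  then show ?thesis unfolding hom_of_der_def using v by simp
qed

lemma corner_absorb: assumes "a \<in> C" shows "eY * a = a" "a * eX = a"
proof -
  obtain m where a: "a = eY * m * eX" using assms unfolding corner_def by blast
  show "eY * a = a" unfolding a using eY_idem by (simp add: mult.assoc)
  show "a * eX = a" unfolding a using eX_idem by (simp add: mult.assoc)
qed

lemma GY_E: "g \<in> GY \<Longrightarrow> eY * g = g \<and> g * eY = g" using GunitsD(1,2)[OF _ idY] by blast
lemma GX_E: "h \<in> GX \<Longrightarrow> eX * h = h \<and> h * eX = h" using GunitsD(1,2)[OF _ idX] by blast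

lemma GY_mult_corner: assumes "g \<in> GY" "a \<in> C" shows "g * a \<in> C"
proof -
  have "eY * (g * a) * eX = (eY * g) * (a * eX)" by (simp add: mult.assoc)
  then show ?thesis unfolding corner_iff using GY_E[OF assms(1)] corner_absorb[OF assms(2)] by simp
qed

lemma corner_mult_GX: assumes "h \<in> GX" "a \<in> C" shows "a * h \<in> C"
proof -
  have "eY * (a * h) * eX = (eY * a) * (h * eX)" by (simp add: mult.assoc)
  then show ?thesis unfolding corner_iff using GX_E[OF assms(1)] corner_absorb[OF assms(2)] by simp
qed

lemma SX_GY: "g \<in> GY \<Longrightarrow> SX g" using GY_SY SY_SX by blast

lemma L_sum: "L m (\<Sum>a\<in>A. f a) = (\<Sum>a\<in>A. L m (f a))"
  by (induction A rule: infinite_finite_induct) (simp_all add: L_zero L_add)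
lemma R_sum: "R (\<Sum>a\<in>A. f a) m = (\<Sum>a\<in>A. R (f a) m)"
  by (induction A rule: infinite_finite_induct) (simp_all add: R_zero R_add)

lemma eval_der_actL: "eval_der d (actL g c) = (\<Sum>a\<in>UNIV. scale (c a) (d (g * a)))"
proof -
  have "eval_der d (actL g c) = (\<Sum>b\<in>UNIV. (\<Sum>a\<in>{a. g * a = b}. scale (c a) (d b)))"
    unfolding eval_der_def actL_def by (simp add: VS.scale_sum_left)
  also have "\<dots> = (\<Sum>a\<in>UNIV. scale (c a) (d (g * a)))" by (rule sum_fibres_UNIV)
  finally show ?thesis .
qed

lemma eval_der_actR: "eval_der d (actR c h) = (\<Sum>a\<in>UNIV. scale (c a) (d (a * h)))"
proof -
  have "eval_der d (actR c h) = (\<Sum>b\<in>UNIV. (\<Sum>a\<in>{a. a * h = b}. scale (c a) (d b)))"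
    unfolding eval_der_def actR_def by (simp add: VS.scale_sum_left)
  also have "\<dots> = (\<Sum>a\<in>UNIV. scale (c a) (d (a * h)))" by (rule sum_fibres_UNIV)
  finally show ?thesis .
qed

lemma sum_freeS_restrict: assumes "c \<in> F" shows "(\<Sum>a\<in>{a. P a}. c a) = (\<Sum>a\<in>{a \<in> C. P a}. c a)"
  using assms by (intro sum.mono_neutral_right) (auto simp: freeS_iff)

lemma actL_freeS: assumes "g \<in> GY" "c \<in> F" shows "actL g c \<in> F"
  unfolding freeS_iff actL_def
proof (intro allI impI)
  fix b assume b: "b \<notin> C"
  have "c a = 0" if "g * a = b" for a
    using that b GY_mult_corner[OF assms(1)] assms(2) by (auto simp: freeS_iff)
  then show "(\<Sum>a\<in>{a. g * a = b}. c a) = 0" by simp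
qed

lemma actR_freeS: assumes "h \<in> GX" "c \<in> F" shows "actR c h \<in> F"
  unfolding freeS_iff actR_def
proof (intro allI impI)
  fix b assume b: "b \<notin> C"
  have "c a = 0" if "a * h = b" for a
    using that b corner_mult_GX[OF assms(1)] assms(2) by (auto simp: freeS_iff)
  then show "(\<Sum>a\<in>{a. a * h = b}. c a) = 0" by simp
qed

lemma rho_actL: assumes g: "g \<in> GY" and c: "c \<in> F" "rho c = (\<lambda>_. 0)"
  shows "rho (actL g c) = (\<lambda>_. 0)"
proof
  fix t
  let ?B = "{a \<in> C. SX a \<and> eX * a * eX = t}"
  have "rho (actL g c) t = (\<Sum>b\<in>?B. (\<Sum>a\<in>{a. g * a = b}. c a))"
    unfolding rhoX_lin_def actL_def ..
  also have "\<dots> = (\<Sum>a\<in>{a. g * a \<in> ?B}. c a)" by (rule sum_fibres)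
  also have "\<dots> = (\<Sum>a\<in>{a \<in> C. g * a \<in> ?B}. c a)" by (rule sum_freeS_restrict[OF c(1)])
  also have "\<dots> = 0"
  proof (rule sum_rhoX_fibres[OF c(2)])
    show "{a \<in> C. g * a \<in> ?B} \<subseteq> {a \<in> C. SX a}" using SX_mult by auto
    fix a a' assume a: "a \<in> {a \<in> C. g * a \<in> ?B}" and a': "a' \<in> C" "SX a'" "eX * a' * eX = eX * a * eX"
    have sg: "SX g" using SX_GY[OF g] .
    have sa: "SX a" using a SX_mult by auto
    have "eX * (g * a') * eX = (eX * g * eX) * (eX * a' * eX)" using rhoX_mult[OF sg a'(2)] .
    also have "\<dots> = eX * (g * a) * eX" using rhoX_mult[OF sg sa] a'(3) by simp
    finally show "a' \<in> {a \<in> C. g * a \<in> ?B}"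
      using a a' GY_mult_corner[OF g] SX_mult sg by auto
  qed
  finally show "rho (actL g c) t = 0" .
qed

lemma rho_actR: assumes h: "h \<in> GX" and c: "c \<in> F" "rho c = (\<lambda>_. 0)"
  shows "rho (actR c h) = (\<lambda>_. 0)"
proof
  fix t
  let ?B = "{a \<in> C. SX a \<and> eX * a * eX = t}"
  have "rho (actR c h) t = (\<Sum>b\<in>?B. (\<Sum>a\<in>{a. a * h = b}. c a))"
    unfolding rhoX_lin_def actR_def ..
  also have "\<dots> = (\<Sum>a\<in>{a. a * h \<in> ?B}. c a)" by (rule sum_fibres)
  also have "\<dots> = (\<Sum>a\<in>{a \<in> C. a * h \<in> ?B}. c a)" by (rule sum_freeS_restrict[OF c(1)])
  also have "\<dots> = 0"
  proof (rule sum_rhoX_fibres[OF c(2)])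
    show "{a \<in> C. a * h \<in> ?B} \<subseteq> {a \<in> C. SX a}" using SX_mult by auto
    fix a a' assume a: "a \<in> {a \<in> C. a * h \<in> ?B}" and a': "a' \<in> C" "SX a'" "eX * a' * eX = eX * a * eX"
    have sh: "SX h" using GX_SX[OF h] .
    have sa: "SX a" using a SX_mult by auto
    have "eX * (a' * h) * eX = (eX * a' * eX) * (eX * h * eX)" using rhoX_mult[OF a'(2) sh] .
    also have "\<dots> = eX * (a * h) * eX" using rhoX_mult[OF sa sh] a'(3) by simp
    finally show "a' \<in> {a \<in> C. a * h \<in> ?B}"
      using a a' corner_mult_GX[OF h] SX_mult sh by auto
  qed
  finally show "rho (actR c h) t = 0" .
qed

lemma eval_der_actL_kernel:
  assumes d: "d \<in> Der L R" and g: "g \<in> GY" and c: "c \<in> F" "rho c = (\<lambda>_. 0)"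
  shows "eval_der d (actL g c) = l g (eval_der d c)"
proof -
  have "eval_der d (actL g c) = (\<Sum>a\<in>UNIV. scale (c a) (L g (d a) + R (d g) a))"
    unfolding eval_der_actL using DerD[OF d] by simp
  also have "\<dots> = L g (eval_der d c) + (\<Sum>a\<in>UNIV. scale (c a) (R (d g) a))"
    by (simp add: VS.scale_right_distrib sum.distrib L_scale eval_der_def L_sum)
  also have "(\<Sum>a\<in>UNIV. scale (c a) (R (d g) a)) = 0" by (rule sum_scale_R_kernel[OF c])
  also have "L g (eval_der d c) = l g (eval_der d c)"
    using GY_SY[OF g] GY_E[OF g] by (simp add: L_eq mult.assoc)
  finally show ?thesis by simp
qed

lemma eval_der_actR_freeS:
  assumes d: "d \<in> Der L R" and h: "h \<in> GX" and c: "c \<in> F"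
  shows "eval_der d (actR c h) = r (eval_der d c) h"
proof -
  have "eval_der d (actR c h) = (\<Sum>a\<in>UNIV. scale (c a) (L a (d h) + R (d a) h))"
    unfolding eval_der_actR using DerD[OF d] by simp
  also have "\<dots> = (\<Sum>a\<in>UNIV. R (scale (c a) (d a)) h)"
  proof (rule sum.cong[OF refl])
    fix a
    show "scale (c a) (L a (d h) + R (d a) h) = R (scale (c a) (d a)) h"
    proof (cases "a \<in> C")
      case True then show ?thesis using corner_not_SY[OF True] by (simp add: L_eq R_scale)
    next
      case False then have "c a = 0" using c by (simp add: freeS_iff)
      then show ?thesis by (simp add: R_scale R_zero)
    qed
  qed
  also have "\<dots> = R (eval_der d c) h" unfolding eval_der_def R_sum ..
  also have "\<dots> = r (eval_der d c) h" using GX_SX[OF h] GX_E[OF h] by (simp add: R_eq mult.assoc)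
  finally show ?thesis .
qed

lemma hom_of_der_HomV:
  assumes d: "d \<in> Der L R"
  shows "hom_of_der d \<in> HomV scale eX eY l r"
  unfolding HomV_def
proof (intro CollectI conjI allI impI ballI)
  fix v :: "('m \<Rightarrow> 'k) set" assume "v \<notin> V" then show "hom_of_der d v = 0" by (simp add: hom_of_der_def)
next
  fix c c' :: "'m \<Rightarrow> 'k" assume "W c \<in> V \<and> W c' \<in> V \<and> c \<in> F \<and> c' \<in> F"
  then have c: "c \<in> F" "rho c = (\<lambda>_. 0)" and c': "c' \<in> F" "rho c' = (\<lambda>_. 0)"
    using Vspace_rhoX by blast+
  have "(\<lambda>a. c a + c' a) \<in> F" "rho (\<lambda>a. c a + c' a) = (\<lambda>_. 0)"
    using c c' by (simp_all add: freeS_iff fun_eq_iff rho_add)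
  then show "hom_of_der d (W (\<lambda>a. c a + c' a)) = hom_of_der d (W c) + hom_of_der d (W c')"
    using hom_of_der_Wclass[OF d] c c' eval_der_add by simp
next
  fix t :: 'k and c :: "'m \<Rightarrow> 'k" assume "W c \<in> V \<and> c \<in> F"
  then have c: "c \<in> F" "rho c = (\<lambda>_. 0)" using Vspace_rhoX by blast+
  have "(\<lambda>a. t * c a) \<in> F" "rho (\<lambda>a. t * c a) = (\<lambda>_. 0)"
    using c by (simp_all add: freeS_iff fun_eq_iff rho_scale)
  then show "hom_of_der d (W (\<lambda>a. t * c a)) = scale t (hom_of_der d (W c))"
    using hom_of_der_Wclass[OF d] c eval_der_scale by simp
next
  fix g c assume g: "g \<in> GY" and "W c \<in> V \<and> c \<in> F"
  then have c: "c \<in> F" "rho c = (\<lambda>_. 0)" using Vspace_rhoX by blast+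
  show "hom_of_der d (W (actL g c)) = l g (hom_of_der d (W c))"
    using hom_of_der_Wclass[OF d actL_freeS[OF g c(1)] rho_actL[OF g c]]
      hom_of_der_Wclass[OF d c] eval_der_actL_kernel[OF d g c] by simp
next
  fix h c assume h: "h \<in> GX" and "W c \<in> V \<and> c \<in> F"
  then have c: "c \<in> F" "rho c = (\<lambda>_. 0)" using Vspace_rhoX by blast+
  show "hom_of_der d (W (actR c h)) = r (hom_of_der d (W c)) h"
    using hom_of_der_Wclass[OF d actR_freeS[OF h c(1)] rho_actR[OF h c]]
      hom_of_der_Wclass[OF d c] eval_der_actR_freeS[OF d h c(1)] by simp
qed

section \<open>A spanning family of V\<close>

definition vgen :: "'m \<Rightarrow> 'm \<Rightarrow> 'k" where
  "vgen m = (\<lambda>a. delta (eY * m * eX) a - (if SX m then delta (eX * m * eX) a else 0))"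

lemma eX_corner: "eX * m * eX \<in> C"
proof -
  have "eX * m * eX = eY * (eX * m) * eX" using eYX by (simp add: mult.assoc[symmetric])
  then show ?thesis using YX_corner by simp
qed

lemma vgen_freeS: "vgen m \<in> F"
  unfolding vgen_def freeS_iff delta_def using YX_corner eX_corner by auto

lemma SX_YX: "SX (eY * m * eX) = SX m" and rho_YX: "eX * (eY * m * eX) * eX = eX * m * eX"
proof -
  show e: "eX * (eY * m * eX) * eX = eX * m * eX" by (simp add: mult.assoc eX_idem eX_eY_absorb)
  show "SX (eY * m * eX) = SX m" unfolding SX_iff_unit e ..
qed

lemma SX_XX: "SX (eX * m * eX) = SX m" and rho_XX: "eX * (eX * m * eX) * eX = eX * m * eX"
proof -
  show e: "eX * (eX * m * eX) * eX = eX * m * eX" by (simp add: mult.assoc eX_idem)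
  show "SX (eX * m * eX) = SX m" unfolding SX_iff_unit e ..
qed

lemma rhoX_vgen: "rho (vgen m) = (\<lambda>_. 0)"
proof
  fix t
  show "rho (vgen m) t = 0"
  proof (cases "SX m")
    case True
    then have "vgen m = (\<lambda>a. delta (eY * m * eX) a - delta (eX * m * eX) a)" by (simp add: vgen_def)
    then show ?thesis using True YX_corner eX_corner
      by (simp add: rho_diff rho_delta SX_YX rho_YX SX_XX rho_XX)
  next
    case False
    then have "vgen m = delta (eY * m * eX)" by (simp add: vgen_def)
    then show ?thesis using False by (simp add: rho_delta SX_YX)
  qed
qed

lemma vgen_Vspace: "W (vgen m) \<in> V" using Wclass_in_Vspace[OF vgen_freeS rhoX_vgen] .

lemma Der_eX_eX: assumes "d \<in> Der L R" "d eX = 0" shows "d (eX * m * eX) = 0"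
proof -
  have "d (eX * m * eX) = d (eX * (m * eX))" by (simp add: mult.assoc)
  also have "\<dots> = R (d eX) (m * eX)" by (rule Der_eX_mult[OF assms(1)])
  finally show ?thesis using assms(2) R_zero by simp
qed

lemma eval_der_vgen: assumes "d \<in> Der L R" "d eX = 0" shows "eval_der d (vgen m) = d m"
proof (cases "SX m")
  case True
  then have "vgen m = (\<lambda>a. delta (eY * m * eX) a - delta (eX * m * eX) a)" by (simp add: vgen_def)
  then show ?thesis using Der_eY_eX[OF assms] Der_eX_eX[OF assms] by (simp add: eval_der_diff eval_der_delta)
next
  case False
  then have "vgen m = delta (eY * m * eX)" by (simp add: vgen_def)
  then show ?thesis using Der_eY_eX[OF assms] by (simp add: eval_der_delta)
qed

lemma eval_der_diff_der: "eval_der (\<lambda>m. d m - d' m) c = eval_der d c - eval_der d' c"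
  unfolding eval_der_def by (simp add: VS.scale_right_diff_distrib sum_subtractf)

lemma hom_of_der_inj:
  assumes d: "d \<in> Der L R" and d': "d' \<in> Der L R" and eq: "hom_of_der d = hom_of_der d'"
  shows "\<exists>b. \<forall>m. d m = d' m + inner_der b m"
proof -
  define e where "e = (\<lambda>m. d m - d' m)"
  have e: "e \<in> Der L R" unfolding e_def by (rule Der_diff[OF d d'])
  have pe: "eval_der e c = 0" if c: "c \<in> F" "rho c = (\<lambda>_. 0)" for c
  proof -
    have "eval_der d c = eval_der d' c" using hom_of_der_Wclass[OF d c] hom_of_der_Wclass[OF d' c] eq by simp
    then show ?thesis unfolding e_def eval_der_diff_der by simp
  qed
  have "normalize_der e m = 0" for m
  proof -
    have "normalize_der e m = eval_der (normalize_der e) (vgen m)" using eval_der_vgen[OF normalize_der_Der[OF e] normalize_der_eX] by simp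
    also have "\<dots> = eval_der e (vgen m)" by (rule eval_normalize_der[OF vgen_freeS rhoX_vgen])
    also have "\<dots> = 0" by (rule pe[OF vgen_freeS rhoX_vgen])
    finally show ?thesis .
  qed
  then have "\<forall>m. d m = d' m + inner_der (- e eX) m"
    unfolding normalize_der_def e_def inner_der_minus by (metis add_diff_cancel_left' add.commute diff_add_eq eq_neg_iff_add_eq_0)
  then show ?thesis by blast
qed

section \<open>From homomorphisms to derivations\<close>

lemma homD:
  assumes "\<phi> \<in> HomV scale eX eY l r"
  shows "\<And>v. v \<notin> V \<Longrightarrow> \<phi> v = 0"
    "\<And>c c'. W c \<in> V \<Longrightarrow> W c' \<in> V \<Longrightarrow> c \<in> F \<Longrightarrow> c' \<in> F \<Longrightarrow>
        \<phi> (W (\<lambda>a. c a + c' a)) = \<phi> (W c) + \<phi> (W c')"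
    "\<And>t c. W c \<in> V \<Longrightarrow> c \<in> F \<Longrightarrow> \<phi> (W (\<lambda>a. t * c a)) = scale t (\<phi> (W c))"
    "\<And>g c. g \<in> GY \<Longrightarrow> W c \<in> V \<Longrightarrow> c \<in> F \<Longrightarrow> \<phi> (W (actL g c)) = l g (\<phi> (W c))"
    "\<And>h c. h \<in> GX \<Longrightarrow> W c \<in> V \<Longrightarrow> c \<in> F \<Longrightarrow> \<phi> (W (actR c h)) = r (\<phi> (W c)) h"
  using assms unfolding HomV_def by blast+

lemma HomV_zero: assumes "\<phi> \<in> HomV scale eX eY l r" shows "\<phi> (W (\<lambda>_. 0)) = 0"
proof -
  have f: "(\<lambda>_. 0) \<in> F" by (simp add: freeS_iff)
  have v: "W (\<lambda>_. 0) \<in> V" using Wclass_in_Vspace[OF f] rho_zero by auto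
  have "\<phi> (W (\<lambda>a. 0 * (\<lambda>_. 0) a)) = scale 0 (\<phi> (W (\<lambda>_. 0)))" using homD(3)[OF assms v f] .
  then show ?thesis by simp
qed

lemma actL_delta: "actL g (delta z) = delta (g * z)"
proof
  fix b
  have "actL g (delta z) b = (\<Sum>a\<in>{a. g * a = b}. if a = z then 1 else 0)"
    unfolding actL_def delta_def ..
  also have "\<dots> = delta (g * z) b" by (simp add: delta_def eq_commute)
  finally show "actL g (delta z) b = delta (g * z) b" .
qed

lemma actR_delta: "actR (delta z) h = delta (z * h)"
proof
  fix b
  have "actR (delta z) h b = (\<Sum>a\<in>{a. a * h = b}. if a = z then 1 else 0)"
    unfolding actR_def delta_def ..
  also have "\<dots> = delta (z * h) b" by (simp add: delta_def eq_commute)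
  finally show "actR (delta z) h b = delta (z * h) b" .
qed

lemma actL_vgen: "actL g (vgen n) = (\<lambda>a. delta (g * (eY * n * eX)) a - (if SX n then delta (g * (eX * n * eX)) a else 0))"
proof
  fix b
  have "actL g (vgen n) b = (\<Sum>a\<in>{a. g * a = b}. delta (eY * n * eX) a) -
      (\<Sum>a\<in>{a. g * a = b}. if SX n then delta (eX * n * eX) a else 0)"
    unfolding actL_def vgen_def by (simp add: sum_subtractf)
  also have "\<dots> = actL g (delta (eY * n * eX)) b - (if SX n then actL g (delta (eX * n * eX)) b else 0)"
    unfolding actL_def by simp
  finally show "actL g (vgen n) b = delta (g * (eY * n * eX)) b - (if SX n then delta (g * (eX * n * eX)) b else 0)"
    by (simp add: actL_delta)
qed

lemma actR_vgen: "actR (vgen m) h = (\<lambda>a. delta ((eY * m * eX) * h) a - (if SX m then delta ((eX * m * eX) * h) a else 0))"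
proof
  fix b
  have "actR (vgen m) h b = (\<Sum>a\<in>{a. a * h = b}. delta (eY * m * eX) a) -
      (\<Sum>a\<in>{a. a * h = b}. if SX m then delta (eX * m * eX) a else 0)"
    unfolding actR_def vgen_def by (simp add: sum_subtractf)
  also have "\<dots> = actR (delta (eY * m * eX)) h b - (if SX m then actR (delta (eX * m * eX)) h b else 0)"
    unfolding actR_def by simp
  finally show "actR (vgen m) h b = delta ((eY * m * eX) * h) b - (if SX m then delta ((eX * m * eX) * h) b else 0)"
    by (simp add: actR_delta)
qed

lemma sim_insert_eY: "(eY * (m * n) * eX, eY * m * eY * n * eX) \<in> sim_rel eX eY"
proof -
  have "(eY * m * n * eX, eY * m * eY * n * eX) \<in> sim_gen eX eY" unfolding sim_gen_def by blast
  then show ?thesis using sim_gen_sub by (auto simp: mult.assoc)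
qed

lemma sim_insert_eX: "\<not> SY m \<Longrightarrow> (eY * (m * n) * eX, eY * m * eX * n * eX) \<in> sim_rel eX eY"
proof -
  assume "\<not> SY m"
  then have "(eY * m * n * eX, eY * m * eX * n * eX) \<in> sim_gen eX eY" unfolding sim_gen_def by blast
  then show ?thesis using sim_gen_sub by (auto simp: mult.assoc)
qed

lemma Wclass_eq_sim: "(z, z') \<in> sim_rel eX eY \<Longrightarrow> (\<lambda>a. f a - g a) = (\<lambda>a. delta z a - delta z' a) \<Longrightarrow> W f = W g"
  using Wclass_eq_iff delta_diff_sim_in_Zsub by metis

lemma corner_nabla_eY: "eY * m * eX \<in> nabla (ideal2 eY)"
proof -
  have "eY * m * eX \<in> ideal2 eX" by (rule ideal2_I[of _ "eY * m" _ 1]) simp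
  then have "ideal2 (eY * m * eX) \<subseteq> ideal2 eX" by (rule ideal2_mono)
  then show ?thesis unfolding nabla_def using XltY by auto
qed

lemma nabla_eX_of_not_SX: assumes "\<not> SX n" shows "eX * n * eX \<in> nabla (ideal2 eX)"
proof -
  have "\<not> ideal2 eX \<subseteq> ideal2 (eX * n * eX)"
  proof
    assume "ideal2 eX \<subseteq> ideal2 (eX * n * eX)"
    then have "eX \<in> ideal2 (eX * n * eX)" using ideal2_self by blast
    then have "eX * n * eX \<in> GX" using eX_idem by (intro corner_unitI[OF idX]) (simp_all add: mult.assoc)
    then show False using assms SX_iff_unit by simp
  qed
  then show ?thesis unfolding nabla_def by simp
qed

lemma Wclass_vgen_mult_units:
  assumes sy: "SY m" and sx: "SX n"
  shows "W (vgen (m * n)) = W (\<lambda>a. actL (eY * m * eY) (vgen n) a + actR (vgen m) (eX * n * eX) a)"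
proof -
  have sxm: "SX m" using SY_SX[OF sy] .
  have q1: "(eY * m * eY) * (eY * n * eX) = eY * m * eY * n * eX"
    and q2: "(eY * m * eY) * (eX * n * eX) = (eY * m * eX) * (eX * n * eX)"
    by (simp_all add: mult.assoc eY_idem eX_idem eX_eY_absorb)
  have "actL (eY * m * eY) (vgen n) =
      (\<lambda>a. delta (eY * m * eY * n * eX) a - delta ((eY * m * eX) * (eX * n * eX)) a)"
    using sx by (simp add: actL_vgen q1 q2)
  moreover have "actR (vgen m) (eX * n * eX) =
      (\<lambda>a. delta ((eY * m * eX) * (eX * n * eX)) a - delta (eX * (m * n) * eX) a)"
    using sxm rhoX_mult[OF sxm sx] by (simp add: actR_vgen)
  moreover have "vgen (m * n) = (\<lambda>a. delta (eY * (m * n) * eX) a - delta (eX * (m * n) * eX) a)"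
    using sxm sx SX_mult by (simp add: vgen_def)
  ultimately have "(\<lambda>a. vgen (m * n) a - (actL (eY * m * eY) (vgen n) a + actR (vgen m) (eX * n * eX) a))
      = (\<lambda>a. delta (eY * (m * n) * eX) a - delta (eY * m * eY * n * eX) a)"
    by (simp add: fun_eq_iff)
  then show ?thesis by (rule Wclass_eq_sim[OF sim_insert_eY])
qed

lemma Wclass_vgen_mult_left_unit:
  assumes nsx: "\<not> SX n"
  shows "W (vgen (m * n)) = W (actL (eY * m * eY) (vgen n))"
proof -
  have q: "(eY * m * eY) * (eY * n * eX) = eY * m * eY * n * eX"
    by (simp add: mult.assoc eY_idem)
  have "actL (eY * m * eY) (vgen n) = delta (eY * m * eY * n * eX)"
    using nsx by (simp add: actL_vgen q)
  moreover have "vgen (m * n) = delta (eY * (m * n) * eX)"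
    using nsx SX_mult by (simp add: vgen_def)
  ultimately have "(\<lambda>a. vgen (m * n) a - actL (eY * m * eY) (vgen n) a)
      = (\<lambda>a. delta (eY * (m * n) * eX) a - delta (eY * m * eY * n * eX) a)"
    by simp
  then show ?thesis by (rule Wclass_eq_sim[OF sim_insert_eY])
qed

lemma Wclass_vgen_mult_right_unit:
  assumes nsy: "\<not> SY m" and sx: "SX n"
  shows "W (vgen (m * n)) = W (actR (vgen m) (eX * n * eX))"
proof -
  have q: "(eY * m * eX) * (eX * n * eX) = eY * m * eX * n * eX"
    by (simp add: mult.assoc eX_idem)
  let ?\<rho> = "\<lambda>a. if SX m then delta (eX * (m * n) * eX) a else 0"
  have "actR (vgen m) (eX * n * eX) = (\<lambda>a. delta (eY * m * eX * n * eX) a - ?\<rho> a)"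
  proof (cases "SX m")
    case True
    then show ?thesis using rhoX_mult[OF True sx, symmetric] by (simp add: actR_vgen q)
  qed (simp add: actR_vgen q)
  moreover have "vgen (m * n) = (\<lambda>a. delta (eY * (m * n) * eX) a - ?\<rho> a)"
    using sx SX_mult by (simp add: vgen_def)
  ultimately have "(\<lambda>a. vgen (m * n) a - actR (vgen m) (eX * n * eX) a)
      = (\<lambda>a. delta (eY * (m * n) * eX) a - delta (eY * m * eX * n * eX) a)"
    by simp
  then show ?thesis by (rule Wclass_eq_sim[OF sim_insert_eX[OF nsy]])
qed

lemma Wclass_vgen_mult_nonunits:
  assumes nsy: "\<not> SY m" and nsx: "\<not> SX n"
  shows "W (vgen (m * n)) = W (\<lambda>_. 0)"
proof -
  define z where "z = eY * m * eX * n * eX"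
  have z: "z = (eY * m * eX) * (eX * n * eX)" unfolding z_def by (simp add: mult.assoc eX_idem)
  \<comment> \<open>z lies in \<nabla>Y\<nabla>X, so its basis vector is already zero in W.\<close>
  have "z \<in> N2" unfolding nabla2_def z using corner_nabla_eY nabla_eX_of_not_SX[OF nsx] by blast
  moreover have "z \<in> C" unfolding z corner_iff by (simp add: mult.assoc eX_idem eY_idem)
  ultimately have "delta z \<in> Z" by (rule delta_nabla2_in_Zsub)
  moreover have "(\<lambda>a. delta (eY * (m * n) * eX) a - delta z a) \<in> Z"
    using delta_diff_sim_in_Zsub[OF sim_insert_eX[OF nsy]] by (simp add: z_def)
  ultimately have "(\<lambda>a. delta (eY * (m * n) * eX) a - 0) \<in> Z"
    using Zsub_closed(2) by fastforce
  moreover have "vgen (m * n) = delta (eY * (m * n) * eX)"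
    using nsx SX_mult by (simp add: vgen_def)
  ultimately show ?thesis using Wclass_eq_iff by simp
qed

definition der_of_hom :: "(('m \<Rightarrow> 'k) set \<Rightarrow> 'a) \<Rightarrow> 'm \<Rightarrow> 'a" where
  "der_of_hom \<phi> m = \<phi> (W (vgen m))"

lemma actL_vgen_kernel: "g \<in> GY \<Longrightarrow> actL g (vgen n) \<in> F \<and> W (actL g (vgen n)) \<in> V"
  using Wclass_in_Vspace[OF actL_freeS[OF _ vgen_freeS] rho_actL[OF _ vgen_freeS rhoX_vgen]]
    actL_freeS[OF _ vgen_freeS] by blast

lemma actR_vgen_kernel: "h \<in> GX \<Longrightarrow> actR (vgen m) h \<in> F \<and> W (actR (vgen m) h) \<in> V"
  using Wclass_in_Vspace[OF actR_freeS[OF _ vgen_freeS] rho_actR[OF _ vgen_freeS rhoX_vgen]]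
    actR_freeS[OF _ vgen_freeS] by blast

lemma der_of_hom_Der:
  assumes hom: "\<phi> \<in> HomV scale eX eY l r"
  shows "der_of_hom \<phi> \<in> Der L R"
  unfolding Der_def
proof (intro CollectI allI)
  fix m n
  have L: "L m (der_of_hom \<phi> n) = \<phi> (W (actL (eY * m * eY) (vgen n)))" if "SY m"
    using homD(4)[OF hom _ vgen_Vspace vgen_freeS] that SY_iff_unit by (simp add: L_eq der_of_hom_def)
  have R: "R (der_of_hom \<phi> m) n = \<phi> (W (actR (vgen m) (eX * n * eX)))" if "SX n"
    using homD(5)[OF hom _ vgen_Vspace vgen_freeS] that SX_iff_unit by (simp add: R_eq der_of_hom_def)
  show "der_of_hom \<phi> (m * n) = L m (der_of_hom \<phi> n) + R (der_of_hom \<phi> m) n"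
  proof (cases "SY m"; cases "SX n")
    assume "SY m" "SX n"
    then show ?thesis
      using L R Wclass_vgen_mult_units homD(2)[OF hom] SY_iff_unit SX_iff_unit
        actL_vgen_kernel actR_vgen_kernel by (simp add: der_of_hom_def)
  next
    assume "SY m" "\<not> SX n"
    then show ?thesis using L Wclass_vgen_mult_left_unit by (simp add: R_eq der_of_hom_def)
  next
    assume "\<not> SY m" "SX n"
    then show ?thesis using R Wclass_vgen_mult_right_unit by (simp add: L_eq der_of_hom_def)
  next
    assume "\<not> SY m" "\<not> SX n"
    then show ?thesis
      using Wclass_vgen_mult_nonunits HomV_zero[OF hom] by (simp add: L_eq R_eq der_of_hom_def)
  qed
qed

lemma HomV_sum_vgen:
  assumes hom: "\<phi> \<in> HomV scale eX eY l r" and fin: "finite A"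
  shows "(\<lambda>x. \<Sum>a\<in>A. c a * vgen a x) \<in> F \<and> rho (\<lambda>x. \<Sum>a\<in>A. c a * vgen a x) = (\<lambda>_. 0) \<and>
         \<phi> (W (\<lambda>x. \<Sum>a\<in>A. c a * vgen a x)) = (\<Sum>a\<in>A. scale (c a) (\<phi> (W (vgen a))))"
  using fin
proof (induction A rule: finite_induct)
  case empty
  have "(\<lambda>_. 0::'k) \<in> F" by (simp add: freeS_iff)
  then show ?case using rho_zero HomV_zero[OF hom] by auto
next
  case (insert a A)
  let ?S = "\<lambda>x. \<Sum>a\<in>A. c a * vgen a x"
  let ?T = "\<lambda>x. c a * vgen a x"
  have e: "(\<lambda>x. \<Sum>a\<in>insert a A. c a * vgen a x) = (\<lambda>x. ?T x + ?S x)"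
    using insert(1,2) by simp
  have TF: "?T \<in> F" using vgen_freeS by (simp add: freeS_iff)
  have Tr: "rho ?T = (\<lambda>_. 0)"
  proof (rule ext)
    fix g show "rho ?T g = 0" using rho_scale[of "c a" "vgen a" g] rhoX_vgen[of a] by simp
  qed
  have TV: "W ?T \<in> V" by (rule Wclass_in_Vspace[OF TF Tr])
  have S: "?S \<in> F" "rho ?S = (\<lambda>_. 0)" "\<phi> (W ?S) = (\<Sum>a\<in>A. scale (c a) (\<phi> (W (vgen a))))"
    using insert(3) by auto
  have SV: "W ?S \<in> V" by (rule Wclass_in_Vspace[OF S(1,2)])
  have f: "(\<lambda>x. ?T x + ?S x) \<in> F" using TF S(1) by (simp add: freeS_iff)
  have r: "rho (\<lambda>x. ?T x + ?S x) = (\<lambda>_. 0)" using Tr S(2) rho_add[of ?T ?S] by auto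
  have "\<phi> (W (\<lambda>x. ?T x + ?S x)) = \<phi> (W ?T) + \<phi> (W ?S)"
    by (rule homD(2)[OF hom TV SV TF S(1)])
  also have "\<phi> (W ?T) = scale (c a) (\<phi> (W (vgen a)))"
    by (rule homD(3)[OF hom vgen_Vspace vgen_freeS])
  finally show ?case unfolding e using f r S(3) insert(1,2) by simp
qed

lemma sum_vgen_eq:
  assumes c: "c \<in> F" "rho c = (\<lambda>_. 0)"
  shows "(\<lambda>x. \<Sum>a\<in>UNIV. c a * vgen a x) = c"
proof
  fix x
  have "(\<Sum>a\<in>UNIV. c a * vgen a x) = (\<Sum>a\<in>UNIV. c a * delta (eY * a * eX) x) -
        (\<Sum>a\<in>UNIV. if a \<in> C \<and> SX a \<and> eX * a * eX = x then c a else 0)"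
    unfolding vgen_def
  proof (simp add: right_diff_distrib sum_subtractf, rule sum.cong[OF refl])
    fix a
    show "c a * (if SX a then delta (eX * a * eX) x else 0) = (if a \<in> C \<and> SX a \<and> eX * a * eX = x then c a else 0)"
      using c(1) by (cases "a \<in> C") (auto simp: freeS_iff delta_def)
  qed
  also have "(\<Sum>a\<in>UNIV. c a * delta (eY * a * eX) x) = (\<Sum>a\<in>UNIV. if a = x then c x else 0)"
  proof (rule sum.cong[OF refl])
    fix a
    show "c a * delta (eY * a * eX) x = (if a = x then c x else 0)"
    proof (cases "a \<in> C")
      case True
      then have "eY * a * eX = a" using corner_iff by simp
      then show ?thesis by (auto simp: delta_def)
    next
      case False
      then show ?thesis using c(1) by (auto simp: freeS_iff)
    qed
  qed
  also have "(\<Sum>a\<in>UNIV. if a \<in> C \<and> SX a \<and> eX * a * eX = x then c a else 0) =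
      (\<Sum>a\<in>{a \<in> UNIV. a \<in> C \<and> SX a \<and> eX * a * eX = x}. c a)"
    by (rule sum.inter_filter[symmetric]) simp
  also have "\<dots> = rho c x"
    unfolding rhoX_lin_def by (rule sum.cong) auto
  finally show "(\<Sum>a\<in>UNIV. c a * vgen a x) = c x" using c(2) by simp
qed

lemma hom_of_der_of_hom: assumes hom: "\<phi> \<in> HomV scale eX eY l r"
  shows "der_of_hom \<phi> \<in> Der L R \<and> hom_of_der (der_of_hom \<phi>) = \<phi>"
proof
  show d: "der_of_hom \<phi> \<in> Der L R" by (rule der_of_hom_Der[OF hom])
  show "hom_of_der (der_of_hom \<phi>) = \<phi>"
  proof
    fix v
    show "hom_of_der (der_of_hom \<phi>) v = \<phi> v"
    proof (cases "v \<in> V")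
      case False then show ?thesis using homD(1)[OF hom] by (simp add: hom_of_der_def)
    next
      case True
      define c where "c = Vrep v"
      have c: "c \<in> F" "rho c = (\<lambda>_. 0)" "v = W c" using VrepD[OF True] c_def by auto
      have "hom_of_der (der_of_hom \<phi>) v = eval_der (der_of_hom \<phi>) c" using hom_of_der_Wclass[OF d c(1,2)] c(3) by simp
      also have "\<dots> = (\<Sum>a\<in>UNIV. scale (c a) (\<phi> (W (vgen a))))" unfolding eval_der_def der_of_hom_def ..
      also have "\<dots> = \<phi> (W (\<lambda>x. \<Sum>a\<in>UNIV. c a * vgen a x))" using HomV_sum_vgen[OF hom, of UNIV c] by simp
      also have "\<dots> = \<phi> v" using sum_vgen_eq[OF c(1,2)] c(3) by simp
      finally show ?thesis .
    qed
  qed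
qed

lemma Inn_eq: "Inn L R = range inner_der"
  unfolding Inn_def inner_der_def by auto

lemma H1class_self: "d \<in> H1class L R d"
proof -
  have "d = (\<lambda>m. d m + inner_der 0 m)" by (simp add: inner_der_zero)
  then show ?thesis unfolding H1class_def Inn_eq by blast
qed

lemma H1class_mem: "d' \<in> H1class L R d \<Longrightarrow> \<exists>b. \<forall>m. d' m = d m + inner_der b m"
  unfolding H1class_def Inn_eq by auto

lemma H1class_eqI: assumes "\<forall>m. d m = d' m + inner_der b m" shows "H1class L R d = H1class L R d'"
proof
  show "H1class L R d \<subseteq> H1class L R d'"
  proof
    fix x assume "x \<in> H1class L R d"
    then obtain b' where x: "x = (\<lambda>m. d m + inner_der b' m)" unfolding H1class_def Inn_eq by auto
    have "x = (\<lambda>m. d' m + inner_der (b + b') m)" using assms unfolding x inner_der_add by (auto simp: add.assoc)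
    then show "x \<in> H1class L R d'" unfolding H1class_def Inn_eq by blast
  qed
  show "H1class L R d' \<subseteq> H1class L R d"
  proof
    fix x assume "x \<in> H1class L R d'"
    then obtain b' where x: "x = (\<lambda>m. d' m + inner_der b' m)" unfolding H1class_def Inn_eq by auto
    have "x = (\<lambda>m. d m + inner_der (b' + - b) m)" using assms unfolding x inner_der_add inner_der_minus
      by (auto simp: algebra_simps)
    then show "x \<in> H1class L R d" unfolding H1class_def Inn_eq by blast
  qed
qed

definition H1_to_HomV :: "('m \<Rightarrow> 'a) set \<Rightarrow> ('m \<Rightarrow> 'k) set \<Rightarrow> 'a" where
  "H1_to_HomV S = hom_of_der (SOME d. d \<in> S)"

lemma hom_of_der_add_inner: "hom_of_der (\<lambda>m. d m + inner_der b m) = hom_of_der d"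
proof
  fix v show "hom_of_der (\<lambda>m. d m + inner_der b m) v = hom_of_der d v"
    unfolding hom_of_der_def using eval_inner_der_kernel[OF VrepD(1,2)] by (simp add: eval_der_add_der)
qed

lemma H1_to_HomV_class: "H1_to_HomV (H1class L R d) = hom_of_der d"
proof -
  have "(SOME d'. d' \<in> H1class L R d) \<in> H1class L R d"
    by (rule someI[where P = "\<lambda>d'. d' \<in> H1class L R d", OF H1class_self])
  then obtain b where "\<forall>m. (SOME d'. d' \<in> H1class L R d) m = d m + inner_der b m"
    using H1class_mem by blast
  then have "(SOME d'. d' \<in> H1class L R d) = (\<lambda>m. d m + inner_der b m)" by auto
  then show ?thesis unfolding H1_to_HomV_def by (simp add: hom_of_der_add_inner)
qed

lemma H1_to_HomV_inj: "inj_on H1_to_HomV (H1 L R)"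
proof (rule inj_onI)
  fix S S' assume "S \<in> H1 L R" "S' \<in> H1 L R" and eq: "H1_to_HomV S = H1_to_HomV S'"
  then obtain d d' where d: "d \<in> Der L R" "S = H1class L R d" and d': "d' \<in> Der L R" "S' = H1class L R d'"
    unfolding H1_def by blast
  have "hom_of_der d = hom_of_der d'" using eq d(2) d'(2) by (simp add: H1_to_HomV_class)
  then obtain b where "\<forall>m. d m = d' m + inner_der b m" using hom_of_der_inj[OF d(1) d'(1)] by blast
  then show "S = S'" using d(2) d'(2) H1class_eqI by blast
qed

lemma H1_to_HomV_image: "H1_to_HomV ` H1 L R = HomV scale eX eY l r"
proof
  show "H1_to_HomV ` H1 L R \<subseteq> HomV scale eX eY l r"
    unfolding H1_def using hom_of_der_HomV by (auto simp: H1_to_HomV_class)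
  show "HomV scale eX eY l r \<subseteq> H1_to_HomV ` H1 L R"
  proof
    fix \<phi> assume "\<phi> \<in> HomV scale eX eY l r"
    then have d: "der_of_hom \<phi> \<in> Der L R" and "\<phi> = H1_to_HomV (H1class L R (der_of_hom \<phi>))"
      using hom_of_der_of_hom by (auto simp: H1_to_HomV_class)
    then show "\<phi> \<in> H1_to_HomV ` H1 L R" unfolding H1_def by blast
  qed
qed

lemma hom_of_der_add: "hom_of_der (\<lambda>m. d m + d' m) = (\<lambda>v. hom_of_der d v + hom_of_der d' v)"
  unfolding hom_of_der_def by (auto simp: eval_der_add_der)

lemma hom_of_der_scale: "hom_of_der (\<lambda>m. scale t (d m)) = (\<lambda>v. scale t (hom_of_der d v))"
  unfolding hom_of_der_def by (auto simp: eval_der_scale_der)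

theorem H1_iso_HomV:
  shows "\<exists>\<Phi>. bij_betw \<Phi> (H1 L R) (HomV scale eX eY l r) \<and>
           (\<forall>d \<in> Der L R. \<forall>d' \<in> Der L R.
              \<Phi> (H1class L R (\<lambda>m. d m + d' m)) =
              (\<lambda>v. \<Phi> (H1class L R d) v + \<Phi> (H1class L R d') v)) \<and>
           (\<forall>c. \<forall>d \<in> Der L R.
              \<Phi> (H1class L R (\<lambda>m. scale c (d m))) =
              (\<lambda>v. scale c (\<Phi> (H1class L R d) v)))"
proof (intro exI conjI ballI allI)
  show "bij_betw H1_to_HomV (H1 L R) (HomV scale eX eY l r)"
    unfolding bij_betw_def using H1_to_HomV_inj H1_to_HomV_image by blast
qed (simp_all add: H1_to_HomV_class hom_of_der_add hom_of_der_scale)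

end

theorem mainTheorem16:
  fixes eX eY :: "'m::{monoid_mult,finite}"
    and scale :: "'k::field \<Rightarrow> 'a::ab_group_add \<Rightarrow> 'a"
    and l :: "'m \<Rightarrow> 'a \<Rightarrow> 'a" and r :: "'a \<Rightarrow> 'm \<Rightarrow> 'a"
  assumes rect: "rectangular TYPE('m)"
    and split: "splitting_field_maxsubgroups TYPE('k) TYPE('m)"
    and idX: "idem eX" and idY: "idem eY"
    and XltY: "ideal2 eX \<subset> ideal2 eY"
    and elt: "eX * eY = eX" "eY * eX = eX" "eX \<noteq> eY"
    and modA: "GG_module scale eX eY l r"
  shows "\<exists>\<Phi>. bij_betw \<Phi> (H1 (bimodL eY l) (bimodR eX r)) (HomV scale eX eY l r) \<and>
           (\<forall>d \<in> Der (bimodL eY l) (bimodR eX r). \<forall>d' \<in> Der (bimodL eY l) (bimodR eX r).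
              \<Phi> (H1class (bimodL eY l) (bimodR eX r) (\<lambda>m. d m + d' m)) =
              (\<lambda>v. \<Phi> (H1class (bimodL eY l) (bimodR eX r) d) v +
                   \<Phi> (H1class (bimodL eY l) (bimodR eX r) d') v)) \<and>
           (\<forall>c. \<forall>d \<in> Der (bimodL eY l) (bimodR eX r).
              \<Phi> (H1class (bimodL eY l) (bimodR eX r) (\<lambda>m. scale c (d m))) =
              (\<lambda>v. scale c (\<Phi> (H1class (bimodL eY l) (bimodR eX r) d) v)))"
proof -
  interpret rect_bimodule eX eY scale l r
    by (unfold_locales) (fact rect idX idY XltY elt(1) elt(2) modA)+
  show ?thesis by (rule H1_iso_HomV)
qed

end
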